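(* Let $\ell_1$ and $\ell_2$ be two lines of a Desargues affine plane, let $O,I$ be distinct points of $\ell_1$, and let $P_P:\ell_1\to\ell_2$ be a parallel projection. Put $O'=P_P(O)$, $I'=P_P(I)$. Then for all points $A,B,C,D\in\ell_1$ with $A\neq D$ and $B\neq C$, \[ P_P\big(c_r(A,B;C,D)\big)=c_r'\big(P_P(A),P_P(B);P_P(C),P_P(D)\big), \] where $c_r$ is the cross ratio computed in the skew field of $\ell_1$ with zero $O$ and unit $I$, and $c_r'$ is the cross ratio computed in the skew field of $\ell_2$ with zero $O'$ and unit $I'$.
   Context: A Desargues affine plane is an affine plane (any two distinct points lie on exactly one line; through a point not on a line $\ell$ there is exactly one line missing $\ell$; there are three non-collinear points) in which Desargues' axiom holds (both when the lines joining corresponding vertices of the two triangles are parallel and when they are concurrent). For distinct points $O,I$ on a line $\ell^{OI}$ and a point $X$ and line $m$, let $\ell^{X}_{m}$ denote the line through $X$ parallel to $m$. Addition of $A,B\in\ell^{OI}$: choose $B_1\notin\ell^{OI}$, let $P_1=\ell^{B_1}_{OI}\cap\ell^{A}_{OB_1}$, and set $A+B=\ell^{P_1}_{BB_1}\cap\ell^{OI}$. Multiplication: choose $B_1\notin\ell^{OI}$, let $P_1=\ell^{A}_{IB_1}\cap\ell^{OB_1}$, and set $A\cdot B=\ell^{P_1}_{BB_1}\cap\ell^{OI}$. With these operations $(\ell^{OI},+,\cdot)$ is a skew field with zero $O$ and unit $I$; $-X$, $X^{-1}$ denote inverses and $X-Y=X+(-Y)$. The cross ratio (w.r.t. base points $O,I$)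 of $A,B,C,D$ with $A\neq D$, $B\neq C$ is $c_r(A,B;C,D)=\big[(A-D)^{-1}(B-D)\big]\big[(B-C)^{-1}(A-C)\big]$. A parallel projection between lines $\ell_1,\ell_2$ is a map $P_P:\ell_1\to\ell_2$ such that for all $A,B\in\ell_1$ the lines $A\,P_P(A)$ and $B\,P_P(B)$ are parallel (all such connecting lines have one common direction); it is a bijection. *)

theory Defs
  imports Main
begin

definition line_through :: "'p set set \<Rightarrow> 'p \<Rightarrow> 'p \<Rightarrow> 'p set" where
  "line_through L P Q = (THE l. l \<in> L \<and> P \<in> l \<and> Q \<in> l)"

definition parallel :: "'p set set \<Rightarrow> 'p set \<Rightarrow> 'p set \<Rightarrow> bool" where
  "parallel L l m \<longleftrightarrow> l \<in> L \<and> m \<in> L \<and> (l = m \<or> l \<inter> m = {})"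

definition par_through :: "'p set set \<Rightarrow> 'p \<Rightarrow> 'p set \<Rightarrow> 'p set" where
  "par_through L X m = (THE l. l \<in> L \<and> X \<in> l \<and> parallel L l m)"

definition meet :: "'p set \<Rightarrow> 'p set \<Rightarrow> 'p" where
  "meet l m = (THE P. P \<in> l \<and> P \<in> m)"

definition collinear3 :: "'p set set \<Rightarrow> 'p \<Rightarrow> 'p \<Rightarrow> 'p \<Rightarrow> bool" where
  "collinear3 L A B C \<longleftrightarrow> (\<exists>l\<in>L. A \<in> l \<and> B \<in> l \<and> C \<in> l)"

definition affine_plane :: "'p set set \<Rightarrow> bool" where
  "affine_plane L \<longleftrightarrow>
     (\<forall>P Q. P \<noteq> Q \<longrightarrow> (\<exists>!l. l \<in> L \<and> P \<in> l \<and> Q \<in> l)) \<and>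
     (\<forall>l\<in>L. \<forall>P. P \<notin> l \<longrightarrow> (\<exists>!m. m \<in> L \<and> P \<in> m \<and> m \<inter> l = {})) \<and>
     (\<exists>A B C. \<not> collinear3 L A B C)"

definition desargues :: "'p set set \<Rightarrow> bool" where
  "desargues L \<longleftrightarrow>
    (\<forall>A B C A' B' C'.
       \<not> collinear3 L A B C \<and> \<not> collinear3 L A' B' C' \<and>
       A \<noteq> A' \<and> B \<noteq> B' \<and> C \<noteq> C' \<and>
       line_through L A A' \<noteq> line_through L B B' \<and>
       line_through L A A' \<noteq> line_through L C C' \<and>
       line_through L B B' \<noteq> line_through L C C' \<and>
       ((parallel L (line_through L A A') (line_through L B B') \<and>
         parallel L (line_through L A A') (line_through L C C')) \<or>
        (\<exists>P. P \<in> line_through L A A' \<and> P \<in> line_through L B B' \<and> P \<in> line_through L C C')) \<and>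
       parallel L (line_through L A B) (line_through L A' B') \<and>
       parallel L (line_through L B C) (line_through L B' C')
     \<longrightarrow> parallel L (line_through L A C) (line_through L A' C'))"

definition desargues_affine_plane :: "'p set set \<Rightarrow> bool" where
  "desargues_affine_plane L \<longleftrightarrow> affine_plane L \<and> desargues L"

text \<open>Skew field operations on the line through Z and U (the auxiliary point B1
  is chosen once and for all; the result does not depend on the choice).\<close>
definition aux_point :: "'p set \<Rightarrow> 'p" where
  "aux_point l = (SOME X. X \<notin> l)"

definition add_pt :: "'p set set \<Rightarrow> 'p \<Rightarrow> 'p \<Rightarrow> 'p \<Rightarrow> 'p \<Rightarrow> 'p" where
  "add_pt L Z U A B =
    (let l = line_through L Z U; B1 = aux_point l;
         P1 = meet (par_through L B1 l) (par_through L A (line_through L Z B1))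
     in meet (par_through L P1 (line_through L B B1)) l)"

definition mul_pt :: "'p set set \<Rightarrow> 'p \<Rightarrow> 'p \<Rightarrow> 'p \<Rightarrow> 'p \<Rightarrow> 'p" where
  "mul_pt L Z U A B =
    (let l = line_through L Z U; B1 = aux_point l;
         P1 = meet (par_through L A (line_through L U B1)) (line_through L Z B1)
     in meet (par_through L P1 (line_through L B B1)) l)"

definition neg_pt :: "'p set set \<Rightarrow> 'p \<Rightarrow> 'p \<Rightarrow> 'p \<Rightarrow> 'p" where
  "neg_pt L Z U X = (THE Y. Y \<in> line_through L Z U \<and> add_pt L Z U X Y = Z)"

definition inv_pt :: "'p set set \<Rightarrow> 'p \<Rightarrow> 'p \<Rightarrow> 'p \<Rightarrow> 'p" where
  "inv_pt L Z U X = (THE Y. Y \<in> line_through L Z U \<and> mul_pt L Z U X Y = U)"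

definition sub_pt :: "'p set set \<Rightarrow> 'p \<Rightarrow> 'p \<Rightarrow> 'p \<Rightarrow> 'p \<Rightarrow> 'p" where
  "sub_pt L Z U X Y = add_pt L Z U X (neg_pt L Z U Y)"

definition cross_ratio :: "'p set set \<Rightarrow> 'p \<Rightarrow> 'p \<Rightarrow> 'p \<Rightarrow> 'p \<Rightarrow> 'p \<Rightarrow> 'p \<Rightarrow> 'p" where
  "cross_ratio L Z U A B C D =
     mul_pt L Z U
       (mul_pt L Z U (inv_pt L Z U (sub_pt L Z U A D)) (sub_pt L Z U B D))
       (mul_pt L Z U (inv_pt L Z U (sub_pt L Z U B C)) (sub_pt L Z U A C))"

definition parallel_projection :: "'p set set \<Rightarrow> 'p set \<Rightarrow> 'p set \<Rightarrow> ('p \<Rightarrow> 'p) \<Rightarrow> bool" where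
  "parallel_projection L l1 l2 f \<longleftrightarrow>
     (\<exists>d\<in>L. \<not> parallel L d l1 \<and>
        (\<forall>X\<in>l1. f X \<in> l2 \<and> f X \<in> par_through L X d))"

end

theory Submission
  imports Defs
begin

text \<open>
  Sums and products on a line are composites of two parallel projections through an auxiliary
  point. By Desargues' theorem, the composite of parallel projections between three lines of a
  pencil is again a parallel projection. Inserting a projection between the two auxiliary lines
  shows that the operations do not depend on the auxiliary point (for addition this needs three
  points on each line; planes with two points per line are checked by tables). The parallel
  projection \<open>g\<close> from \<open>l\<^sub>1\<close> to \<open>l\<^sub>2\<close> then commutes with both operations: if the lines
  are parallel or meet in the zero, the pencil lemma handles one operation and Desargues' theorem
  for parallel lines, with the auxiliary point on a line of direction \<open>d\<close>, the other; in general
  \<open>g\<close> factors through the parallel to \<open>l\<^sub>2\<close> through the zero. So \<open>g\<close> is an isomorphism of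
  skew fields, and it preserves differences, inverses and hence the cross ratio.
\<close>

locale desargues_plane =
  fixes L :: "'p set set"
  assumes desargues_affine_plane: "desargues_affine_plane L"
    and two_points: "\<exists>P Q :: 'p. P \<noteq> Q"
begin

abbreviation line :: "'p \<Rightarrow> 'p \<Rightarrow> 'p set" where
  "line \<equiv> line_through L"

abbreviation par :: "'p \<Rightarrow> 'p set \<Rightarrow> 'p set" where
  "par \<equiv> par_through L"

abbreviation parallel_lines :: "'p set \<Rightarrow> 'p set \<Rightarrow> bool" (infix "\<parallel>" 50) where
  "l \<parallel> m \<equiv> parallel L l m"

lemma line_ex1: "P \<noteq> Q \<Longrightarrow> \<exists>!l. l \<in> L \<and> P \<in> l \<and> Q \<in> l"
  using desargues_affine_plane unfolding desargues_affine_plane_def affine_plane_def by simp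

lemma disjoint_line_ex1: "l \<in> L \<Longrightarrow> P \<notin> l \<Longrightarrow> \<exists>!m. m \<in> L \<and> P \<in> m \<and> m \<inter> l = {}"
  using desargues_affine_plane unfolding desargues_affine_plane_def affine_plane_def by simp

lemma noncollinear_ex: "\<exists>A B C. \<not> collinear3 L A B C"
  using desargues_affine_plane unfolding desargues_affine_plane_def affine_plane_def by blast

lemma line_props:
  assumes "P \<noteq> Q"
  shows "line P Q \<in> L" "P \<in> line P Q" "Q \<in> line P Q"
  unfolding line_through_def using theI'[OF line_ex1[OF assms]] by blast+

lemma line_eqI: "P \<noteq> Q \<Longrightarrow> l \<in> L \<Longrightarrow> P \<in> l \<Longrightarrow> Q \<in> l \<Longrightarrow> line P Q = l"
  unfolding line_through_def using the1_equality[OF line_ex1] by blast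

lemma line_commute: "line P Q = line Q P"
  unfolding line_through_def by (simp add: conj_commute conj_left_commute)

lemma lines_eqI:
  "l \<in> L \<Longrightarrow> m \<in> L \<Longrightarrow> P \<in> l \<Longrightarrow> P \<in> m \<Longrightarrow> Q \<in> l \<Longrightarrow> Q \<in> m \<Longrightarrow> P \<noteq> Q \<Longrightarrow> l = m"
  using line_eqI[of P Q l] line_eqI[of P Q m] by simp

lemma collinear3_iff: "A \<noteq> B \<Longrightarrow> collinear3 L A B C \<longleftrightarrow> C \<in> line A B"
  unfolding collinear3_def using line_props[of A B] line_eqI[of A B] by blast

lemma ex_point_notin: "l \<in> L \<Longrightarrow> \<exists>X. X \<notin> l"
  using noncollinear_ex unfolding collinear3_def by blast

lemma aux_point_notin: "l \<in> L \<Longrightarrow> aux_point l \<notin> l"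
  unfolding aux_point_def using ex_point_notin by (metis someI_ex)

lemma parallel_refl: "l \<in> L \<Longrightarrow> l \<parallel> l"
  unfolding parallel_def by auto

lemma parallel_sym: "l \<parallel> m \<Longrightarrow> m \<parallel> l"
  unfolding parallel_def by auto

lemma parallel_in_L: "l \<parallel> m \<Longrightarrow> l \<in> L \<and> m \<in> L"
  unfolding parallel_def by auto

lemma parallel_common_point_eq: "l \<parallel> m \<Longrightarrow> P \<in> l \<Longrightarrow> P \<in> m \<Longrightarrow> l = m"
  unfolding parallel_def by auto

lemma parallel_notin: "l \<parallel> m \<Longrightarrow> l \<noteq> m \<Longrightarrow> P \<in> l \<Longrightarrow> P \<notin> m"
  using parallel_common_point_eq by blast

lemma intersecting_not_parallel: "l \<in> L \<Longrightarrow> m \<in> L \<Longrightarrow> P \<in> l \<Longrightarrow> P \<in> m \<Longrightarrow> l \<noteq> m \<Longrightarrow> \<not> l \<parallel> m"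
  using parallel_common_point_eq by blast

lemma parallel_trans:
  assumes "a \<parallel> b" "b \<parallel> c"
  shows "a \<parallel> c"
proof (rule ccontr)
  assume "\<not> a \<parallel> c"
  moreover have L: "a \<in> L" "b \<in> L" "c \<in> L"
    using assms parallel_in_L by auto
  ultimately obtain P where P: "P \<in> a" "P \<in> c" "a \<noteq> c"
    unfolding parallel_def by auto
  show False
  proof (cases "P \<in> b")
    case True
    then show ?thesis
      using parallel_common_point_eq[OF assms(1)] parallel_common_point_eq[OF assms(2)] P by auto
  next
    case False
    have "a \<inter> b = {}" "c \<inter> b = {}"
      using assms False P unfolding parallel_def by auto
    then show False
      using disjoint_line_ex1[OF L(2) False] P L by blast
  qed
qed

lemma not_parallel_trans: "a \<parallel> b \<Longrightarrow> \<not> e \<parallel> a \<Longrightarrow> \<not> e \<parallel> b"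
  using parallel_trans parallel_sym by blast

lemma par_ex1:
  assumes "l \<in> L"
  shows "\<exists>!m. m \<in> L \<and> X \<in> m \<and> m \<parallel> l"
proof (cases "X \<in> l")
  case True
  show ?thesis
  proof
    show "l \<in> L \<and> X \<in> l \<and> l \<parallel> l"
      using True assms parallel_refl by auto
  next
    fix m assume "m \<in> L \<and> X \<in> m \<and> m \<parallel> l"
    then show "m = l"
      using parallel_common_point_eq True by blast
  qed
next
  case False
  then obtain m where m: "m \<in> L" "X \<in> m" "m \<inter> l = {}"
    using disjoint_line_ex1[OF assms] by blast
  show ?thesis
  proof
    show "m \<in> L \<and> X \<in> m \<and> m \<parallel> l"
      using m assms unfolding parallel_def by auto
  next
    fix m' assume m': "m' \<in> L \<and> X \<in> m' \<and> m' \<parallel> l"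
    then have "m' \<inter> l = {}"
      using False unfolding parallel_def by auto
    then show "m' = m"
      using disjoint_line_ex1[OF assms False] m' m by blast
  qed
qed

lemma par_props: "l \<in> L \<Longrightarrow> par X l \<in> L \<and> X \<in> par X l \<and> par X l \<parallel> l"
  unfolding par_through_def using theI'[OF par_ex1] by blast

lemma par_eqI: "l \<in> L \<Longrightarrow> m \<in> L \<Longrightarrow> X \<in> m \<Longrightarrow> m \<parallel> l \<Longrightarrow> par X l = m"
  unfolding par_through_def using the1_equality[OF par_ex1] by blast

lemma par_self: "l \<in> L \<Longrightarrow> X \<in> l \<Longrightarrow> par X l = l"
  using par_eqI parallel_refl by blast

lemma par_cong_parallel:
  assumes "l \<parallel> m"
  shows "par X l = par X m"
proof -
  have L: "l \<in> L" "m \<in> L"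
    using parallel_in_L[OF assms] by auto
  then have "par X l \<parallel> m"
    using parallel_trans par_props assms by blast
  then show ?thesis
    using par_eqI[OF L(2)] par_props[OF L(1)] by blast
qed

lemma par_mem_eq: "l \<in> L \<Longrightarrow> Y \<in> par X l \<Longrightarrow> par Y l = par X l"
  using par_props[of l X] par_eqI[of l "par X l" Y] by blast

lemma par_off:
  assumes "l \<in> L" "X \<notin> l"
  shows "par X l \<in> L" "X \<in> par X l" "par X l \<parallel> l" "par X l \<inter> l = {}" "par X l \<noteq> l"
proof -
  show a: "par X l \<in> L" "X \<in> par X l" "par X l \<parallel> l"
    using par_props[OF assms(1)] by auto
  show "par X l \<noteq> l"
    using a assms by auto
  then show "par X l \<inter> l = {}"
    using a unfolding parallel_def by auto
qed

lemma par_inj: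
  assumes "l \<in> L" "d \<in> L" "\<not> d \<parallel> l" "Y1 \<in> l" "Y2 \<in> l" "par Y1 d = par Y2 d"
  shows "Y1 = Y2"
proof -
  have "Y2 \<in> par Y1 d" "par Y1 d \<noteq> l"
    using par_props[OF assms(2)] assms(3,6) parallel_sym by metis+
  then show ?thesis
    using lines_eqI[OF assms(1)] par_props[OF assms(2)] assms(4,5) by metis
qed

lemma mem_par_iff:
  assumes "e \<in> L" "X \<noteq> Y"
  shows "Y \<in> par X e \<longleftrightarrow> line X Y \<parallel> e"
proof
  assume "Y \<in> par X e"
  then have "line X Y = par X e"
    using line_eqI[OF assms(2)] par_props[OF assms(1)] by blast
  then show "line X Y \<parallel> e"
    using par_props[OF assms(1)] by simp
next
  assume "line X Y \<parallel> e"
  then have "par X e = line X Y"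
    using par_eqI[OF assms(1)] line_props[OF assms(2)] by blast
  then show "Y \<in> par X e"
    using line_props[OF assms(2)] by simp
qed

lemma line_eq_par: "e \<in> L \<Longrightarrow> X \<noteq> Y \<Longrightarrow> Y \<in> par X e \<Longrightarrow> line X Y = par X e"
  using line_eqI[of X Y "par X e"] par_props[of e X] by blast

lemma meet_ex1:
  assumes "l \<in> L" "m \<in> L" "\<not> l \<parallel> m"
  shows "\<exists>!P. P \<in> l \<and> P \<in> m"
proof -
  obtain P where "P \<in> l" "P \<in> m" "l \<noteq> m"
    using assms unfolding parallel_def by auto
  then show ?thesis
    using lines_eqI[OF assms(1,2)] by blast
qed

lemma meet_props: "l \<in> L \<Longrightarrow> m \<in> L \<Longrightarrow> \<not> l \<parallel> m \<Longrightarrow> meet l m \<in> l \<and> meet l m \<in> m"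
  unfolding meet_def using theI'[OF meet_ex1] by blast

lemma meet_eqI: "l \<in> L \<Longrightarrow> m \<in> L \<Longrightarrow> \<not> l \<parallel> m \<Longrightarrow> P \<in> l \<Longrightarrow> P \<in> m \<Longrightarrow> meet l m = P"
  unfolding meet_def using the1_equality[OF meet_ex1] by blast

lemma meet_commute: "meet l m = meet m l"
  unfolding meet_def by (simp add: conj_commute)

lemma line_to_off_point:
  assumes "l \<in> L" "P \<in> l" "X \<notin> l"
  shows "line P X \<in> L" "P \<in> line P X" "X \<in> line P X" "\<not> line P X \<parallel> l" "line P X \<noteq> l"
proof -
  have PX: "P \<noteq> X"
    using assms by auto
  show a: "line P X \<in> L" "P \<in> line P X" "X \<in> line P X"
    using line_props[OF PX] by auto
  show "line P X \<noteq> l"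
    using a assms by auto
  then show "\<not> line P X \<parallel> l"
    using intersecting_not_parallel a assms by blast
qed

lemma line_not_parallel_par: "l \<in> L \<Longrightarrow> P \<in> l \<Longrightarrow> X \<notin> l \<Longrightarrow> \<not> line P X \<parallel> par X l"
  using not_parallel_trans[OF parallel_sym[OF par_off(3)] line_to_off_point(4)] by blast

lemma two_lines_through_avoiding:
  assumes "Q \<noteq> P"
  shows "\<exists>n1 n2. n1 \<in> L \<and> n2 \<in> L \<and> n1 \<noteq> n2 \<and> Q \<in> n1 \<and> Q \<in> n2 \<and> P \<notin> n1 \<and> P \<notin> n2"
proof -
  have l: "line P Q \<in> L" "P \<in> line P Q" "Q \<in> line P Q"
    using line_props assms by metis+
  obtain R where R: "R \<notin> line P Q"
    using ex_point_notin[OF l(1)] by blast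
  have n1: "line Q R \<in> L" "Q \<in> line Q R" "R \<in> line Q R" "P \<notin> line Q R"
    using line_to_off_point[OF l(1,3) R] line_eqI[OF assms] line_commute R by metis+
  have m: "line P R \<in> L" "P \<in> line P R" "R \<in> line P R" "Q \<notin> line P R"
    using line_to_off_point[OF l(1,2) R] line_eqI[OF assms[symmetric]] R by metis+
  define n2 where "n2 = par Q (line P R)"
  have n2: "n2 \<in> L" "Q \<in> n2" "n2 \<inter> line P R = {}"
    using par_off[OF m(1,4)] n2_def by auto
  then have "n2 \<noteq> line Q R" "P \<notin> n2"
    using n1 m by auto
  then show ?thesis
    using n1 n2 by metis
qed

lemma ex_two_points_on_line:
  assumes "l \<in> L"
  shows "\<exists>P Q. P \<noteq> Q \<and> P \<in> l \<and> Q \<in> l"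
proof (rule ccontr)
  assume a: "\<not> ?thesis"
  obtain P Q where PQ: "Q \<noteq> P" "Q \<notin> l" "l \<subseteq> {P}"
  proof (cases "l = {}")
    case True
    then show ?thesis
      using that two_points by blast
  next
    case False
    then obtain P where "P \<in> l"
      by blast
    moreover obtain Q where "Q \<noteq> P"
      using two_points by metis
    ultimately show ?thesis
      using that a by blast
  qed
  then obtain n1 n2 where n: "n1 \<in> L" "n2 \<in> L" "n1 \<noteq> n2" "Q \<in> n1" "Q \<in> n2" "n1 \<inter> l = {}"
    "n2 \<inter> l = {}"
    using two_lines_through_avoiding[OF PQ(1)] by blast
  then show False
    using disjoint_line_ex1[OF assms PQ(2)] by blast
qed

lemma ex_point_notin_other_line: "l \<in> L \<Longrightarrow> m \<in> L \<Longrightarrow> l \<noteq> m \<Longrightarrow> \<exists>P. P \<in> l \<and> P \<notin> m"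
  using ex_two_points_on_line lines_eqI by metis

section \<open>Parallel projections\<close>

definition proj :: "'p set \<Rightarrow> 'p set \<Rightarrow> 'p \<Rightarrow> 'p" where
  "proj b e X = meet (par X e) b"

lemma proj_props:
  assumes "b \<in> L" "e \<in> L" "\<not> e \<parallel> b"
  shows "proj b e X \<in> b \<and> proj b e X \<in> par X e"
proof -
  have "\<not> par X e \<parallel> b"
    using not_parallel_trans[OF _ assms(3)] par_props[OF assms(2)] parallel_sym by blast
  then show ?thesis
    unfolding proj_def using meet_props par_props assms by blast
qed

lemma proj_eqI:
  assumes "b \<in> L" "e \<in> L" "\<not> e \<parallel> b" "Y \<in> b" "Y \<in> par X e"
  shows "proj b e X = Y"
proof -
  have "\<not> par X e \<parallel> b"
    using not_parallel_trans[OF _ assms(3)] par_props[OF assms(2)] parallel_sym by blast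
  then show ?thesis
    unfolding proj_def using meet_eqI par_props assms by blast
qed

lemma proj_fixed: "b \<in> L \<Longrightarrow> e \<in> L \<Longrightarrow> \<not> e \<parallel> b \<Longrightarrow> X \<in> b \<Longrightarrow> proj b e X = X"
  using proj_eqI par_props by blast

lemma proj_along_line:
  "b \<in> L \<Longrightarrow> e \<in> L \<Longrightarrow> \<not> e \<parallel> b \<Longrightarrow> Y \<in> b \<Longrightarrow> Y \<in> e \<Longrightarrow> X \<in> e \<Longrightarrow> proj b e X = Y"
  using proj_eqI par_self by metis

lemma par_proj: "b \<in> L \<Longrightarrow> e \<in> L \<Longrightarrow> \<not> e \<parallel> b \<Longrightarrow> par (proj b e X) e = par X e"
  using proj_props par_mem_eq by blast

lemma proj_eq_if_par_eq: "par S e = par P e \<Longrightarrow> proj b e S = proj b e P"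
  unfolding proj_def by simp

lemma proj_cong_parallel: "e \<parallel> e' \<Longrightarrow> proj b e X = proj b e' X"
  unfolding proj_def using par_cong_parallel by metis

lemma proj_inj:
  assumes "a \<in> L" "b \<in> L" "e \<in> L" "\<not> e \<parallel> a" "\<not> e \<parallel> b" "X \<in> a" "X' \<in> a"
    and "proj b e X = proj b e X'"
  shows "X = X'"
  using par_inj[OF assms(1,3,4,6,7)] par_proj[OF assms(2,3,5)] assms(8) by metis

lemma par_point_notin:
  assumes "l \<in> L" "d \<in> L" "\<not> d \<parallel> l" "B \<in> l" "X \<in> par B d" "X \<noteq> B"
  shows "X \<notin> l"
proof
  assume "X \<in> l"
  moreover have "par B d \<noteq> l"
    using par_props[OF assms(2)] assms(3) parallel_sym by metis
  ultimately show False
    using lines_eqI[OF assms(1) _ _ assms(5,4)] par_props[OF assms(2)] assms(6) by blast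
qed

lemma proj_proj_parallel_direction:
  assumes "a \<in> L" "b \<in> L" "d \<in> L" "\<not> d \<parallel> a" "\<not> d \<parallel> b" "k \<parallel> d" "P' \<in> par P d"
  shows "proj b d (proj a k P) = proj b k P'"
proof -
  have k: "k \<in> L" "\<not> k \<parallel> a"
    using assms(4,6) parallel_in_L not_parallel_trans parallel_sym by blast+
  have "par (proj a k P) d = par P d"
    using par_proj[OF assms(1) k(1,2)] par_cong_parallel[OF assms(6)] by metis
  also have "\<dots> = par P' d"
    using par_mem_eq[OF assms(3,7)] by simp
  finally show ?thesis
    using proj_eq_if_par_eq proj_cong_parallel[OF assms(6)] by metis
qed

section \<open>Desargues' theorem for pencils of lines\<close>

definition pencil :: "'p set \<Rightarrow> 'p set \<Rightarrow> 'p set \<Rightarrow> bool" where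
  "pencil a b c \<longleftrightarrow> (a \<parallel> b \<and> a \<parallel> c) \<or> (\<exists>P. P \<in> a \<and> P \<in> b \<and> P \<in> c)"

lemma pencil_commute: "pencil a b c \<Longrightarrow> pencil b a c \<and> pencil a c b"
  unfolding pencil_def using parallel_sym parallel_trans by blast

lemma pencil_mem:
  assumes "a \<in> L" "b \<in> L" "c \<in> L" "a \<noteq> b" "a \<noteq> c" "b \<noteq> c" "pencil a b c"
    and "x \<in> a" "x \<in> c"
  shows "x \<in> b"
proof (cases "a \<parallel> b \<and> a \<parallel> c")
  case True
  then show ?thesis
    using parallel_common_point_eq assms by blast
next
  case False
  then obtain P where "P \<in> a" "P \<in> b" "P \<in> c"
    using assms(7) unfolding pencil_def by blast
  then show ?thesis
    using lines_eqI[OF assms(1,3)] assms by metis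
qed

lemma desargues_lines:
  assumes "a \<in> L" "b \<in> L" "c \<in> L" "a \<noteq> b" "a \<noteq> c" "b \<noteq> c" "pencil a b c"
    and "A \<in> a" "A' \<in> a" "A \<noteq> A'" "B \<in> b" "B' \<in> b" "B \<noteq> B'" "C \<in> c" "C' \<in> c" "C \<noteq> C'"
    and "A \<noteq> B" "C \<notin> line A B" "A' \<noteq> B'" "C' \<notin> line A' B'"
    and "line A B \<parallel> line A' B'" "line B C \<parallel> line B' C'"
  shows "line A C \<parallel> line A' C'"
proof -
  have "line A A' = a" "line B B' = b" "line C C' = c"
    using line_eqI assms by auto
  moreover have "\<not> collinear3 L A B C" "\<not> collinear3 L A' B' C'"
    using collinear3_iff assms by auto
  moreover have "desargues L"
    using desargues_affine_plane unfolding desargues_affine_plane_def by simp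
  ultimately show ?thesis
    unfolding desargues_def
    by (elim allE[where x = A] allE[where x = B] allE[where x = C]
        allE[where x = A'] allE[where x = B'] allE[where x = C'] mp)
      (use assms in \<open>simp add: pencil_def[symmetric]\<close>)
qed

lemma little_desargues:
  assumes "d \<in> L"
    and "A' \<in> par A d" "B' \<in> par B d" "C' \<in> par C d" "A \<noteq> A'" "B \<noteq> B'" "C \<noteq> C'"
    and "par A d \<noteq> par B d" "par A d \<noteq> par C d" "par B d \<noteq> par C d"
    and "A \<noteq> B" "C \<notin> line A B" "A' \<noteq> B'" "C' \<notin> line A' B'"
    and "line A B \<parallel> line A' B'" "line B C \<parallel> line B' C'"
  shows "line A C \<parallel> line A' C'"
proof (rule desargues_lines)
  show "pencil (par A d) (par B d) (par C d)"
    unfolding pencil_def using par_props[OF assms(1)] parallel_sym parallel_trans by metis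
qed (use assms par_props[OF assms(1)] in simp_all)

context
  fixes a b c e1 e2
  assumes abc: "a \<in> L" "b \<in> L" "c \<in> L" "a \<noteq> b" "a \<noteq> c" "b \<noteq> c" "pencil a b c"
    and e1: "e1 \<in> L" "\<not> e1 \<parallel> a" "\<not> e1 \<parallel> b"
    and e2: "e2 \<in> L" "\<not> e2 \<parallel> b" "\<not> e2 \<parallel> c"
begin

lemma pencil_proj_proj_notin:
  assumes "A \<in> a" "A \<notin> b"
  shows "A \<notin> c" "proj b e1 A \<notin> c" "proj c e2 (proj b e1 A) \<notin> b"
proof -
  have ac: "x \<in> b" if "x \<in> a" "x \<in> c" for x
    using pencil_mem[OF abc] that .
  have bc: "x \<in> a" if "x \<in> b" "x \<in> c" for x
    using pencil_mem[of b a c] abc pencil_commute that by metis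
  define B where "B = proj b e1 A"
  have B: "B \<in> b"
    using proj_props[OF abc(2) e1(1,3)] B_def by blast
  show "A \<notin> c"
    using ac assms by blast
  show Bc: "B \<notin> c"
  proof
    assume "B \<in> c"
    then have "B \<in> a"
      using bc B by blast
    then have "B = A"
      using proj_inj[OF abc(1,2) e1] proj_fixed[OF abc(2) e1(1,3) B] assms(1) B_def by metis
    then show False
      using B assms(2) by simp
  qed
  show "proj c e2 B \<notin> b"
  proof
    assume "proj c e2 B \<in> b"
    then have "proj c e2 B = B"
      using proj_inj[OF abc(2,3) e2] proj_fixed[OF abc(3) e2(1,3)] proj_props[OF abc(3) e2(1,3)] B
      by metis
    then show False
      using Bc proj_props[OF abc(3) e2(1,3)] by metis
  qed
qed

lemma pencil_proj_proj_parallel: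
  assumes A0: "A0 \<in> a" "A0 \<notin> b" and A: "A \<in> a" "A \<notin> b" "A \<noteq> A0"
  shows "line A0 (proj c e2 (proj b e1 A0)) \<parallel> line A (proj c e2 (proj b e1 A))"
proof -
  have B: "proj b e1 Y \<in> b" "proj b e1 Y \<in> par Y e1" for Y
    using proj_props[OF abc(2) e1(1,3)] by auto
  have C: "proj c e2 Y \<in> c" "proj c e2 Y \<in> par Y e2" for Y
    using proj_props[OF abc(3) e2(1,3)] by auto
  have YB: "Y \<noteq> proj b e1 Y" if "Y \<notin> b" for Y
    using B that by metis
  have BC: "proj b e1 Y \<noteq> proj c e2 (proj b e1 Y)" if "Y \<in> a" "Y \<notin> b" for Y
    using pencil_proj_proj_notin(2)[OF that] C by metis
  have line_YB: "line Y (proj b e1 Y) = par Y e1" if "Y \<notin> b" for Y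
    using line_eq_par[OF e1(1) YB[OF that]] B by blast
  have line_BC: "line (proj b e1 Y) (proj c e2 (proj b e1 Y)) = par (proj b e1 Y) e2"
    if "Y \<in> a" "Y \<notin> b" for Y
    using line_eq_par[OF e2(1) BC[OF that]] C by blast
  have par_B: "par (proj b e1 Y) e1 = par Y e1" for Y
    using par_proj[OF abc(2) e1(1,3)] .
  show ?thesis
  proof (cases "e1 \<parallel> e2")
    case True
    have "line Y (proj c e2 (proj b e1 Y)) = par Y e1" if "Y \<in> a" "Y \<notin> b" for Y
    proof -
      have "proj c e2 (proj b e1 Y) \<in> par Y e1"
        using C(2) par_cong_parallel[OF True] par_B by metis
      then show ?thesis
        using line_eq_par[OF e1(1)] pencil_proj_proj_notin(1)[OF that] C(1) by metis
    qed
    then show ?thesis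
      using A0 A par_props[OF e1(1)] parallel_sym parallel_trans by metis
  next
    case False
    have noncollinear: "proj c e2 (proj b e1 Y) \<notin> line Y (proj b e1 Y)" if "Y \<in> a" "Y \<notin> b" for Y
    proof
      assume "proj c e2 (proj b e1 Y) \<in> line Y (proj b e1 Y)"
      then have "line (proj b e1 Y) (proj c e2 (proj b e1 Y)) = par (proj b e1 Y) e1"
        using line_eq_par[OF e1(1) BC[OF that]] line_YB[OF that(2)] par_B by metis
      then have "par (proj b e1 Y) e1 = par (proj b e1 Y) e2"
        using line_BC[OF that] by simp
      then show False
        using False par_props[OF e1(1)] par_props[OF e2(1)] parallel_trans parallel_sym by metis
    qed
    have B0B: "proj b e1 A0 \<noteq> proj b e1 A"
      using proj_inj[OF abc(1,2) e1] A0 A by blast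
    then have C0C: "proj c e2 (proj b e1 A0) \<noteq> proj c e2 (proj b e1 A)"
      using proj_inj[OF abc(2,3) e2] B by blast
    have "line A0 (proj b e1 A0) \<parallel> line A (proj b e1 A)"
      using line_YB A0 A par_props[OF e1(1)] parallel_sym parallel_trans by metis
    moreover have "line (proj b e1 A0) (proj c e2 (proj b e1 A0)) \<parallel>
        line (proj b e1 A) (proj c e2 (proj b e1 A))"
      using line_BC A0 A par_props[OF e2(1)] parallel_sym parallel_trans by metis
    ultimately show ?thesis
      using desargues_lines[OF abc A0(1) A(1) A(3)[symmetric] B(1) B(1) B0B C(1) C(1) C0C
          YB[OF A0(2)] noncollinear[OF A0] YB[OF A(2)] noncollinear[OF A(1,2)]] by blast
  qed
qed

lemma pencil_proj_proj_eq_proj: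
  assumes A0: "A0 \<in> a" "A0 \<notin> b" and A: "A \<in> a"
  shows "proj c e2 (proj b e1 A) = proj c (line A0 (proj c e2 (proj b e1 A0))) A"
proof -
  define C0 where "C0 = proj c e2 (proj b e1 A0)"
  define C where "C = proj c e2 (proj b e1 A)"
  have C0: "C0 \<in> c" and C: "C \<in> c"
    using proj_props[OF abc(3) e2(1,3)] C0_def C_def by auto
  have A0C0: "A0 \<noteq> C0"
    using pencil_proj_proj_notin(1)[OF A0] C0 by blast
  define e3 where "e3 = line A0 C0"
  have e3: "e3 \<in> L" "A0 \<in> e3" "C0 \<in> e3"
    using line_props[OF A0C0] e3_def by auto
  have e3c: "\<not> e3 \<parallel> c"
    using intersecting_not_parallel[OF e3(1) abc(3) e3(3) C0] e3(2) pencil_proj_proj_notin(1)[OF A0]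
    by blast
  have "C \<in> par A e3"
  proof (cases "A = A0 \<or> A \<in> b")
    case True
    moreover have "A \<in> b \<Longrightarrow> A \<in> c"
      using pencil_mem[of a c b] pencil_commute abc A by metis
    ultimately show ?thesis
      using par_self[OF e3(1,2)] e3(3) par_props[OF e3(1)]
        proj_fixed[OF abc(2) e1(1,3)] proj_fixed[OF abc(3) e2(1,3)] C_def C0_def by auto
  next
    case False
    then have "line A C \<parallel> e3"
      using pencil_proj_proj_parallel[OF A0 A] C_def C0_def e3_def parallel_sym by blast
    moreover have "A \<noteq> C"
      using pencil_proj_proj_notin(1)[of A] A False C by blast
    ultimately show ?thesis
      using mem_par_iff[OF e3(1)] by blast
  qed
  then show ?thesis
    using proj_eqI[OF abc(3) e3(1) e3c C] C_def C0_def e3_def by simp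
qed

end

lemma translate_parallel:
  assumes l: "l1 \<in> L" "l2 \<in> L" "l1 \<parallel> l2" "l1 \<noteq> l2" and d: "d \<in> L" "\<not> d \<parallel> l1"
    and P: "P \<in> l1" and R: "R \<in> l1" "P \<noteq> R" and Y: "Y \<notin> l1" "Y \<notin> par P d" "Y \<notin> par R d"
    and Y': "Y' \<in> par Y d" and RY: "line (proj l2 d R) Y' \<parallel> line R Y"
  shows "Y' \<notin> l2" and "line (proj l2 d P) Y' \<parallel> line P Y"
proof -
  have d2: "\<not> d \<parallel> l2"
    using not_parallel_trans[OF l(3) d(2)] .
  have g: "proj l2 d V \<in> l2" "proj l2 d V \<in> par V d" for V
    using proj_props[OF l(2) d(1) d2] by auto
  have off_l2: "V \<notin> l2" if "V \<in> l1" for V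
    using parallel_notin[OF l(3,4) that] .
  have RY_L: "line R Y \<in> L" "R \<in> line R Y" "Y \<in> line R Y" "line R Y \<noteq> l1"
    using line_to_off_point[OF l(1) R(1) Y(1)] by auto
  have par_RY: "par R d \<noteq> par Y d" "par P d \<noteq> par Y d"
    using Y(2,3) par_props[OF d(1)] by metis+
  have Y'_ne: "Y' \<noteq> proj l2 d R"
    using Y' g(2) par_RY(1) par_mem_eq[OF d(1)] by metis
  have "Y \<noteq> Y'"
  proof
    assume "Y = Y'"
    then have "line (proj l2 d R) Y' = line R Y"
      using RY parallel_common_point_eq RY_L(3) line_props Y'_ne by metis
    then have "proj l2 d R \<in> line R Y"
      using line_props[OF Y'_ne[symmetric]] by metis
    moreover have "R \<noteq> proj l2 d R"
      using g(1) off_l2[OF R(1)] by metis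
    ultimately have "line R Y = par R d"
      using line_eqI[OF _ RY_L(1,2)] line_eq_par[OF d(1) _ g(2)] by metis
    then show False
      using Y(3) RY_L(3) by simp
  qed
  moreover show Y'_l2: "Y' \<notin> l2"
  proof
    assume "Y' \<in> l2"
    then have "line (proj l2 d R) Y' = l2"
      using line_eqI[OF Y'_ne[symmetric] l(2) g(1)] by blast
    then have "line R Y \<parallel> l1"
      using RY l(3) parallel_trans parallel_sym by metis
    then show False
      using parallel_common_point_eq RY_L(2,4) R(1) by blast
  qed
  moreover have "line P R = l1" "line (proj l2 d P) (proj l2 d R) = l2" "proj l2 d P \<noteq> proj l2 d R"
    using line_eqI[OF R(2) l(1) P R(1)] line_eqI[OF _ l(2) g(1) g(1)]
      proj_inj[OF l(1,2) d d2 P R(1)] R(2) by metis+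
  moreover have "par P d \<noteq> par R d" "P \<noteq> proj l2 d P" "R \<noteq> proj l2 d R"
    using par_inj[OF l(1) d P R(1)] R(2) off_l2[OF P] off_l2[OF R(1)] g(1) by metis+
  ultimately have "line P Y \<parallel> line (proj l2 d P) Y'"
    using little_desargues[OF d(1) g(2) g(2) Y', of P R] par_RY R(2) Y(1) l(3) parallel_sym[OF RY]
      by simp
  then show "line (proj l2 d P) Y' \<parallel> line P Y"
    using parallel_sym by blast
qed

section \<open>Addition and multiplication with an arbitrary auxiliary point\<close>

text \<open>The constructions of \<open>add_pt\<close> and \<open>mul_pt\<close>, with the auxiliary point \<open>B\<^sub>1\<close> replaced
  by an arbitrary point \<open>X\<close> off the line, written as composites of two parallel projections.\<close>

definition add_aux :: "'p set \<Rightarrow> 'p \<Rightarrow> 'p \<Rightarrow> 'p \<Rightarrow> 'p \<Rightarrow> 'p" where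
  "add_aux l Z X A B = proj l (line B X) (proj (par X l) (line Z X) A)"

definition mul_aux :: "'p set \<Rightarrow> 'p \<Rightarrow> 'p \<Rightarrow> 'p \<Rightarrow> 'p \<Rightarrow> 'p \<Rightarrow> 'p" where
  "mul_aux l Z U X A B = proj l (line B X) (proj (line Z X) (line U X) A)"

lemma add_pt_conv_add_aux:
  assumes "l \<in> L" "Z \<in> l" "U \<in> l" "Z \<noteq> U"
  shows "add_pt L Z U A B = add_aux l Z (aux_point l) A B"
proof -
  have "line Z U = l"
    using line_eqI assms by blast
  then show ?thesis
    unfolding add_pt_def add_aux_def Let_def proj_def
    by (simp only: meet_commute[of "par (aux_point l) l"])
qed

lemma mul_pt_conv_mul_aux:
  assumes "l \<in> L" "Z \<in> l" "U \<in> l" "Z \<noteq> U"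
  shows "mul_pt L Z U A B = mul_aux l Z U (aux_point l) A B"
proof -
  have "line Z U = l"
    using line_eqI assms by blast
  then show ?thesis
    unfolding mul_pt_def mul_aux_def Let_def proj_def by simp
qed

lemma proj_direction_ex1:
  assumes l: "l \<in> L" and P: "P \<notin> l" and X: "X \<notin> l" and T: "T \<in> l"
  shows "\<exists>!B. B \<in> l \<and> proj l (line B X) P = T"
proof -
  have PT: "P \<noteq> T"
    using P T by auto
  have TP: "line T P \<in> L" "\<not> line T P \<parallel> l"
    using line_to_off_point[OF l T P] by auto
  have iff: "proj l (line B X) P = T \<longleftrightarrow> B \<in> par X (line T P)" if B: "B \<in> l" for B
  proof -
    have BX: "line B X \<in> L" "\<not> line B X \<parallel> l" "B \<noteq> X"
      using line_to_off_point[OF l B X] B X by auto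
    have "proj l (line B X) P = T \<longleftrightarrow> T \<in> par P (line B X)"
      using proj_eqI[OF l BX(1,2) T] proj_props[OF l BX(1,2)] by blast
    also have "\<dots> \<longleftrightarrow> line T P \<parallel> line B X"
      using mem_par_iff[OF BX(1) PT] line_commute by metis
    also have "\<dots> \<longleftrightarrow> B \<in> par X (line T P)"
      using mem_par_iff[OF TP(1) BX(3)[symmetric]] line_commute parallel_sym by metis
    finally show ?thesis .
  qed
  have "\<not> par X (line T P) \<parallel> l"
    using not_parallel_trans[OF _ TP(2)] par_props[OF TP(1)] parallel_sym by blast
  then have "\<exists>!B. B \<in> l \<and> B \<in> par X (line T P)"
    using meet_ex1[OF l] par_props[OF TP(1)] parallel_sym by blast
  then show ?thesis
    using iff by blast
qed

context
  fixes l Z X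
  assumes l: "l \<in> L" and Z: "Z \<in> l" and X: "X \<notin> l"
begin

lemma add_aux_lines:
  shows "par X l \<in> L" "line Z X \<in> L" "\<not> line Z X \<parallel> par X l"
    and "proj (par X l) (line Z X) A \<in> par X l" "proj (par X l) (line Z X) A \<notin> l"
    and "B \<in> l \<Longrightarrow> line B X \<in> L \<and> \<not> line B X \<parallel> l \<and> \<not> line B X \<parallel> par X l"
proof -
  show a: "par X l \<in> L" "line Z X \<in> L" "\<not> line Z X \<parallel> par X l"
    using par_off[OF l X] line_to_off_point[OF l Z X] line_not_parallel_par[OF l Z X] by auto
  show b: "proj (par X l) (line Z X) A \<in> par X l"
    using proj_props[OF a] by blast
  then show "proj (par X l) (line Z X) A \<notin> l"
    using par_off[OF l X] by blast
  show "B \<in> l \<Longrightarrow> line B X \<in> L \<and> \<not> line B X \<parallel> l \<and> \<not> line B X \<parallel> par X l"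
    using line_to_off_point[OF l _ X] line_not_parallel_par[OF l _ X] by blast
qed

lemma add_aux_in: "B \<in> l \<Longrightarrow> add_aux l Z X A B \<in> l"
  unfolding add_aux_def using proj_props[OF l] add_aux_lines(6) by blast

lemma add_aux_zero_left:
  assumes "B \<in> l"
  shows "add_aux l Z X Z B = B"
proof -
  have "proj (par X l) (line Z X) Z = X"
    using proj_along_line[OF add_aux_lines(1-3)] par_off[OF l X] line_to_off_point(2,3)[OF l Z X]
      by blast
  moreover have "proj l (line B X) X = B"
    using proj_along_line[OF l] add_aux_lines(6)[OF assms] assms
      line_to_off_point(2,3)[OF l assms X] by blast
  ultimately show ?thesis
    unfolding add_aux_def by simp
qed

lemma add_aux_zero_right:
  assumes "A \<in> l"
  shows "add_aux l Z X A Z = A"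
proof -
  have "A \<in> par (proj (par X l) (line Z X) A) (line Z X)"
    using par_proj[OF add_aux_lines(1-3)] par_props[OF add_aux_lines(2)] by simp
  then show ?thesis
    unfolding add_aux_def using proj_eqI[OF l] add_aux_lines(6)[OF Z] assms by blast
qed

lemma add_aux_cancel_right:
  assumes "A \<in> l" "A' \<in> l" "B \<in> l" "add_aux l Z X A B = add_aux l Z X A' B"
  shows "A = A'"
proof -
  have "proj (par X l) (line Z X) A = proj (par X l) (line Z X) A'"
    using proj_inj[OF add_aux_lines(1) l] add_aux_lines(6)[OF assms(3)] add_aux_lines(4) assms(4)
    unfolding add_aux_def by blast
  then show ?thesis
    using proj_inj[OF l add_aux_lines(1,2) line_to_off_point(4)[OF l Z X] add_aux_lines(3)
        assms(1,2)]
    by blast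
qed

lemma add_aux_solve: "A \<in> l \<Longrightarrow> T \<in> l \<Longrightarrow> \<exists>!B. B \<in> l \<and> add_aux l Z X A B = T"
  unfolding add_aux_def using proj_direction_ex1[OF l add_aux_lines(5) X] by blast

end

context
  fixes l Z U X
  assumes l: "l \<in> L" and Z: "Z \<in> l" and U: "U \<in> l" and ZU: "Z \<noteq> U" and X: "X \<notin> l"
begin

lemma mul_aux_lines:
  shows "line Z X \<in> L" "line U X \<in> L" "\<not> line U X \<parallel> line Z X" "\<not> line U X \<parallel> l"
    and "proj (line Z X) (line U X) A \<in> line Z X"
    and "B \<in> l \<Longrightarrow> line B X \<in> L \<and> \<not> line B X \<parallel> l"
    and "Z \<in> line Z X" "X \<in> line Z X" "U \<notin> line Z X"
proof -
  show a: "line Z X \<in> L" "line U X \<in> L" "\<not> line U X \<parallel> l"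
    using line_to_off_point[OF l Z X] line_to_off_point[OF l U X] by auto
  show c: "Z \<in> line Z X" "X \<in> line Z X"
    using line_to_off_point[OF l Z X] by auto
  show d: "U \<notin> line Z X"
    using lines_eqI[OF l a(1) Z c(1)] U ZU line_to_off_point(5)[OF l Z X] by blast
  show b: "\<not> line U X \<parallel> line Z X"
    using intersecting_not_parallel[OF a(2) a(1) line_to_off_point(3)[OF l U X] c(2)] d
      line_to_off_point(2)[OF l U X] by blast
  show "proj (line Z X) (line U X) A \<in> line Z X"
    using proj_props[OF a(1,2) b] by blast
  show "B \<in> l \<Longrightarrow> line B X \<in> L \<and> \<not> line B X \<parallel> l"
    using line_to_off_point[OF l _ X] by blast
qed

lemma mul_aux_in: "B \<in> l \<Longrightarrow> mul_aux l Z U X A B \<in> l"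
  unfolding mul_aux_def using proj_props[OF l] mul_aux_lines(6) by blast

lemma mul_aux_one_left:
  assumes "B \<in> l"
  shows "mul_aux l Z U X U B = B"
proof -
  have "proj (line Z X) (line U X) U = X"
    using proj_along_line[OF mul_aux_lines(1,2,3,8)] line_to_off_point(2,3)[OF l U X] by blast
  moreover have "proj l (line B X) X = B"
    using proj_along_line[OF l] mul_aux_lines(6)[OF assms] assms
      line_to_off_point(2,3)[OF l assms X]
    by blast
  ultimately show ?thesis
    unfolding mul_aux_def by simp
qed

lemma mul_aux_one_right:
  assumes "A \<in> l"
  shows "mul_aux l Z U X A U = A"
proof -
  have "A \<in> par (proj (line Z X) (line U X) A) (line U X)"
    using par_proj[OF mul_aux_lines(1,2,3)] par_props[OF mul_aux_lines(2)] by simp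
  then show ?thesis
    unfolding mul_aux_def using proj_eqI[OF l] mul_aux_lines(6)[OF U] assms by blast
qed

lemma mul_aux_zero_left:
  assumes "B \<in> l"
  shows "mul_aux l Z U X Z B = Z"
proof -
  have "proj (line Z X) (line U X) Z = Z"
    using proj_fixed[OF mul_aux_lines(1,2,3,7)] .
  then show ?thesis
    unfolding mul_aux_def using proj_fixed[OF l _ _ Z] mul_aux_lines(6)[OF assms] by simp
qed

lemma mul_aux_zero_right:
  assumes "A \<in> l"
  shows "mul_aux l Z U X A Z = Z"
proof -
  have "Z \<in> par (proj (line Z X) (line U X) A) (line Z X)"
    using par_self[OF mul_aux_lines(1,5)] mul_aux_lines(7) by simp
  then show ?thesis
    unfolding mul_aux_def using proj_eqI[OF l] mul_aux_lines(6)[OF Z] Z by blast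
qed

lemma mul_aux_solve:
  assumes "A \<in> l" "A \<noteq> Z" "T \<in> l"
  shows "\<exists>!B. B \<in> l \<and> mul_aux l Z U X A B = T"
proof -
  have "proj (line Z X) (line U X) A \<notin> l"
  proof
    assume "proj (line Z X) (line U X) A \<in> l"
    then have "proj (line Z X) (line U X) A = Z"
      using lines_eqI[OF l mul_aux_lines(1) _ mul_aux_lines(5) Z mul_aux_lines(7)]
        line_to_off_point(5)[OF l Z X] by blast
    then have "proj (line Z X) (line U X) A = proj (line Z X) (line U X) Z"
      using proj_fixed[OF mul_aux_lines(1,2,3,7)] by simp
    then show False
      using proj_inj[OF l mul_aux_lines(1,2,4,3) assms(1) Z] assms(2) by blast
  qed
  then show ?thesis
    unfolding mul_aux_def using proj_direction_ex1[OF l _ X assms(3)] by blast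
qed

end

lemma add_pt_in:
  assumes "Z \<noteq> U" "B \<in> line Z U"
  shows "add_pt L Z U A B \<in> line Z U"
proof -
  note l = line_props[OF assms(1)]
  have "add_pt L Z U A B = add_aux (line Z U) Z (aux_point (line Z U)) A B"
    using add_pt_conv_add_aux l assms(1) by blast
  then show ?thesis
    using add_aux_in[OF _ _ aux_point_notin assms(2)] l by simp
qed

lemma mul_pt_in:
  assumes "Z \<noteq> U" "B \<in> line Z U"
  shows "mul_pt L Z U A B \<in> line Z U"
proof -
  note l = line_props[OF assms(1)]
  have "mul_pt L Z U A B = mul_aux (line Z U) Z U (aux_point (line Z U)) A B"
    using mul_pt_conv_mul_aux l assms(1) by blast
  then show ?thesis
    using mul_aux_in[OF _ _ _ assms(1) aux_point_notin assms(2)] l by simp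
qed

lemma mul_pt_zero_right: "Z \<noteq> U \<Longrightarrow> A \<in> line Z U \<Longrightarrow> mul_pt L Z U A Z = Z"
  using mul_pt_conv_mul_aux mul_aux_zero_right line_props aux_point_notin by metis

lemma mul_pt_one_right: "Z \<noteq> U \<Longrightarrow> A \<in> line Z U \<Longrightarrow> mul_pt L Z U A U = A"
  using mul_pt_conv_mul_aux mul_aux_one_right line_props aux_point_notin by metis

section \<open>Independence of the auxiliary point\<close>

text \<open>Insert the projection from \<open>m1\<close> to \<open>m2\<close> along \<open>B1 B2\<close> and apply
  \<open>pencil_proj_proj_eq_proj\<close> to the pencils \<open>l, m1, m2\<close> and \<open>m1, m2, l\<close>.\<close>

lemma swap_auxiliary_point:
  assumes lines: "l \<in> L" "m1 \<in> L" "m2 \<in> L" "l \<noteq> m1" "l \<noteq> m2" "m1 \<noteq> m2" "pencil l m1 m2"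
    and B1: "B1 \<in> m1" "B1 \<notin> m2" "B1 \<notin> l" and B2: "B2 \<in> m2" "B2 \<notin> m1" "B2 \<notin> l"
    and Q: "Q \<in> l" "Q \<notin> m1" and A: "A \<in> l" and B: "B \<in> l" "B \<notin> m2"
  shows "proj l (line B B1) (proj m1 (line Q B1) A) = proj l (line B B2) (proj m2 (line Q B2) A)"
proof -
  have pencil': "pencil m1 m2 l"
    using pencil_commute lines(7) by blast
  have B12: "B1 \<noteq> B2"
    using B1 B2 by blast
  define e where "e = line B1 B2"
  have e: "e \<in> L" "B1 \<in> e" "B2 \<in> e"
    using line_props[OF B12] e_def by auto
  have e_m1: "\<not> e \<parallel> m1" and e_m2: "\<not> e \<parallel> m2"
    using intersecting_not_parallel[OF e(1) lines(2) e(2) B1(1)]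
      intersecting_not_parallel[OF e(1) lines(3) e(3) B2(1)] e B1 B2 by blast+
  have QB1: "line Q B1 \<in> L" "\<not> line Q B1 \<parallel> l" "\<not> line Q B1 \<parallel> m1"
    using line_to_off_point[OF lines(1) Q(1) B1(3)]
      line_to_off_point[OF lines(2) B1(1) Q(2)] line_commute by metis+
  have BB2: "line B B2 \<in> L" "\<not> line B B2 \<parallel> m2" "\<not> line B B2 \<parallel> l"
    using line_to_off_point[OF lines(1) B(1) B2(3)]
      line_to_off_point[OF lines(3) B2(1) B(2)] line_commute by metis+
  define P1 where "P1 = proj m1 (line Q B1) A"
  have P1: "P1 \<in> m1"
    using proj_props[OF lines(2) QB1(1,3)] P1_def by blast
  have "proj m1 (line Q B1) Q = B1"
    using proj_along_line[OF lines(2) QB1(1,3) B1(1)] line_props B1(3) Q(1) by metis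
  moreover have B1_B2: "proj m2 e B1 = B2"
    using proj_along_line[OF lines(3) e(1) e_m2 B2(1) e(3,2)] .
  ultimately have first: "proj m2 e P1 = proj m2 (line Q B2) A"
    using pencil_proj_proj_eq_proj[OF lines QB1 e(1) e_m1 e_m2 Q(1) _ A] pencil_mem[OF lines] Q
      P1_def
    by metis
  have "proj l (line B B2) B2 = B"
    using proj_along_line[OF lines(1) BB2(1,3) B(1)] line_props B2(3) B(1) by metis
  then have "proj l (line B B2) (proj m2 e P1) = proj l (line B1 B) P1"
    using pencil_proj_proj_eq_proj[OF lines(2,3,1) lines(6) lines(4,5)[symmetric] pencil'
        e(1) e_m1 e_m2
        BB2 B1(1,2) P1] B1_B2 by metis
  then show ?thesis
    using first P1_def line_commute by metis
qed

lemma add_aux_indep_nonparallel: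
  assumes l: "l \<in> L" and Z: "Z \<in> l" and A: "A \<in> l" and B: "B \<in> l"
    and X1: "X1 \<notin> l" and X2: "X2 \<notin> l" and ne: "par X1 l \<noteq> par X2 l"
  shows "add_aux l Z X1 A B = add_aux l Z X2 A B"
  unfolding add_aux_def
proof (rule swap_auxiliary_point)
  show "pencil l (par X1 l) (par X2 l)"
    unfolding pencil_def using par_off(3)[OF l] X1 X2 parallel_sym by blast
  show "X1 \<notin> par X2 l" "X2 \<notin> par X1 l"
    using par_mem_eq[OF l] ne by metis+
qed (use l Z A B X1 X2 ne par_off[OF l X1] par_off[OF l X2] in auto)

lemma mul_aux_indep_nonconcurrent:
  assumes l: "l \<in> L" and Z: "Z \<in> l" and U: "U \<in> l" and ZU: "Z \<noteq> U"
    and A: "A \<in> l" and B: "B \<in> l" "B \<noteq> Z"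
    and X1: "X1 \<notin> l" and X2: "X2 \<notin> l" and ne: "line Z X1 \<noteq> line Z X2"
  shows "mul_aux l Z U X1 A B = mul_aux l Z U X2 A B"
proof -
  note n1 = line_to_off_point[OF l Z X1] and n2 = line_to_off_point[OF l Z X2]
  have "X1 \<notin> line Z X2"
    using line_eqI[of Z X1 "line Z X2"] n2 Z X1 ne by blast
  moreover have "X2 \<notin> line Z X1"
    using line_eqI[of Z X2 "line Z X1"] n1 Z X2 ne by blast
  moreover have "B \<notin> line Z X2"
    using lines_eqI[OF l n2(1) Z n2(2) B(1)] n2(5) B(2) by blast
  moreover have "pencil l (line Z X1) (line Z X2)"
    unfolding pencil_def using Z n1(2) n2(2) by blast
  ultimately show ?thesis
    unfolding mul_aux_def
    using swap_auxiliary_point[OF l n1(1) n2(1) n1(5)[symmetric] n2(5)[symmetric] ne _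
        n1(3) _ X1 n2(3) _ X2 U mul_aux_lines(9)[OF l Z U ZU X1] A B(1)]
    by blast
qed

lemma mul_aux_indep:
  assumes l: "l \<in> L" and Z: "Z \<in> l" and U: "U \<in> l" and ZU: "Z \<noteq> U"
    and A: "A \<in> l" and B: "B \<in> l" and X1: "X1 \<notin> l" and X2: "X2 \<notin> l"
  shows "mul_aux l Z U X1 A B = mul_aux l Z U X2 A B"
proof (cases "B = Z")
  case True
  then show ?thesis
    using mul_aux_zero_right[OF l Z U ZU X1 A] mul_aux_zero_right[OF l Z U ZU X2 A] by simp
next
  case BZ: False
  show ?thesis
  proof (cases "line Z X1 = line Z X2")
    case False
    then show ?thesis
      using mul_aux_indep_nonconcurrent[OF l Z U ZU A B BZ X1 X2] by blast
  next
    case True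
    define n where "n = line Z X1"
    have n: "n \<in> L" "Z \<in> n" "X1 \<in> n" "n \<noteq> l" "U \<notin> n"
      using line_to_off_point[OF l Z X1] mul_aux_lines(9)[OF l Z U ZU X1] n_def by auto
    have "\<not> par U n \<parallel> par X1 l"
    proof
      assume "par U n \<parallel> par X1 l"
      then have "n \<parallel> l"
        using par_off(3)[OF n(1,5)] par_off(3)[OF l X1] parallel_trans parallel_sym by metis
      then show False
        using parallel_common_point_eq n Z by blast
    qed
    then obtain X3 where X3: "X3 \<in> par U n" "X3 \<in> par X1 l"
      using meet_props par_off[OF n(1,5)] par_off[OF l X1] by blast
    have X3l: "X3 \<notin> l" and "X3 \<notin> n"
      using X3 par_off[OF n(1,5)] par_off[OF l X1] by blast+
    then have "line Z X3 \<noteq> n"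
      using line_to_off_point(3)[OF l Z X3l] by metis
    then show ?thesis
      using mul_aux_indep_nonconcurrent[OF l Z U ZU A B BZ X1 X3l]
        mul_aux_indep_nonconcurrent[OF l Z U ZU A B BZ X3l X2] True n_def by metis
  qed
qed

text \<open>Only addition needs an auxiliary point off two given lines, hence a third point on every line.
  If one line has just two points, then so do all lines, and the operations are given by tables.\<close>

definition thick :: bool where
  "thick \<longleftrightarrow> (\<forall>k\<in>L. \<exists>P Q R. P \<in> k \<and> Q \<in> k \<and> R \<in> k \<and> P \<noteq> Q \<and> P \<noteq> R \<and> Q \<noteq> R)"

lemma ex_point_off_two_lines:
  assumes "thick" "l \<in> L" "m \<in> L"
  shows "\<exists>X. X \<notin> l \<and> X \<notin> m"
proof (cases "l = m")
  case True
  then show ?thesis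
    using ex_point_notin[OF assms(2)] by blast
next
  case False
  obtain P Q where P: "P \<in> l" "P \<notin> m" and Q: "Q \<in> m" "Q \<notin> l"
    using ex_point_notin_other_line assms(2,3) False by metis
  then have PQ: "P \<noteq> Q"
    by auto
  obtain R where R: "R \<in> line P Q" "R \<noteq> P" "R \<noteq> Q"
    using assms(1) line_props[OF PQ] unfolding thick_def by metis
  have "R \<notin> l" "R \<notin> m"
    using lines_eqI[OF assms(2) _ P(1) _ _ R(1)] lines_eqI[OF assms(3) _ Q(1) _ _ R(1)]
      line_props[OF PQ] P Q R by metis+
  then show ?thesis
    by blast
qed

lemma add_aux_indep:
  assumes "thick" and l: "l \<in> L" and Z: "Z \<in> l" and A: "A \<in> l" and B: "B \<in> l"
    and X1: "X1 \<notin> l" and X2: "X2 \<notin> l"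
  shows "add_aux l Z X1 A B = add_aux l Z X2 A B"
proof (cases "par X1 l = par X2 l")
  case False
  then show ?thesis
    using add_aux_indep_nonparallel[OF l Z A B X1 X2] by blast
next
  case True
  obtain X3 where X3: "X3 \<notin> l" "X3 \<notin> par X1 l"
    using ex_point_off_two_lines[OF assms(1) l par_off(1)[OF l X1]] by blast
  then have "par X3 l \<noteq> par X1 l"
    using par_off(2)[OF l X3(1)] by metis
  then show ?thesis
    using add_aux_indep_nonparallel[OF l Z A B X1 X3(1)]
      add_aux_indep_nonparallel[OF l Z A B X3(1) X2] True
    by metis
qed

lemma add_pt_eq_add_aux:
  assumes "thick" "l \<in> L" "Z \<in> l" "U \<in> l" "Z \<noteq> U" "X \<notin> l" "A \<in> l" "B \<in> l"
  shows "add_pt L Z U A B = add_aux l Z X A B"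
  using add_pt_conv_add_aux[OF assms(2-5)]
    add_aux_indep[OF assms(1-3,7,8) aux_point_notin assms(6)] assms(2)
  by simp

lemma mul_pt_eq_mul_aux:
  assumes "l \<in> L" "Z \<in> l" "U \<in> l" "Z \<noteq> U" "X \<notin> l" "A \<in> l" "B \<in> l"
  shows "mul_pt L Z U A B = mul_aux l Z U X A B"
  using mul_pt_conv_mul_aux[OF assms(1-4)]
    mul_aux_indep[OF assms(1-4,6,7) aux_point_notin assms(5)] assms(1)
  by simp

lemma ex_point_avoiding_two:
  assumes "thick" "k \<in> L"
  shows "\<exists>X. X \<in> k \<and> X \<noteq> P \<and> X \<noteq> Q"
proof -
  obtain X1 X2 X3 where "X1 \<in> k" "X2 \<in> k" "X3 \<in> k" "X1 \<noteq> X2" "X1 \<noteq> X3" "X2 \<noteq> X3"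
    using assms unfolding thick_def by blast
  then show ?thesis
    by metis
qed

section \<open>Planes with two points on each line\<close>

lemma thick_if_three_points:
  assumes l: "l \<in> L" and P: "P \<in> l" "Q \<in> l" "R \<in> l" "P \<noteq> Q" "P \<noteq> R" "Q \<noteq> R"
  shows thick
  unfolding thick_def
proof
  fix k assume k: "k \<in> L"
  show "\<exists>P Q R. P \<in> k \<and> Q \<in> k \<and> R \<in> k \<and> P \<noteq> Q \<and> P \<noteq> R \<and> Q \<noteq> R"
  proof (cases "k = l")
    case True
    then show ?thesis
      using P by blast
  next
    case False
    obtain P0 Q0 where P0: "P0 \<in> l" "P0 \<notin> k" and Q0: "Q0 \<in> k" "Q0 \<notin> l"
      using ex_point_notin_other_line l k False by metis
    then have e: "line P0 Q0 \<in> L" "\<not> line P0 Q0 \<parallel> l" "\<not> line P0 Q0 \<parallel> k"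
      using line_to_off_point[OF l P0(1) Q0(2)] line_to_off_point[OF k Q0(1) P0(2)] line_commute
        by metis+
    have "proj k (line P0 Q0) V \<in> k" for V
      using proj_props[OF k e(1,3)] by blast
    moreover have "proj k (line P0 Q0) P \<noteq> proj k (line P0 Q0) Q"
        "proj k (line P0 Q0) P \<noteq> proj k (line P0 Q0) R"
          "proj k (line P0 Q0) Q \<noteq> proj k (line P0 Q0) R"
      using proj_inj[OF l k e P(1,2)] proj_inj[OF l k e P(1,3)] proj_inj[OF l k e P(2,3)] P(4-6)
        by blast+
    ultimately show ?thesis
      by blast
  qed
qed

lemma two_point_line:
  assumes "\<not> thick" "l \<in> L" "Z \<in> l" "U \<in> l" "Z \<noteq> U" "Y \<in> l"
  shows "Y = Z \<or> Y = U"
  using thick_if_three_points[OF assms(2-4,6)] assms(1,5) by blast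

lemma add_pt_two_point_line:
  assumes "\<not> thick" "Z \<noteq> U" "A \<in> line Z U" "B \<in> line Z U"
  shows "add_pt L Z U A B = (if A = B then Z else U)"
proof -
  have l: "line Z U \<in> L" "Z \<in> line Z U" "U \<in> line Z U"
    using line_props[OF assms(2)] by auto
  define X where "X = aux_point (line Z U)"
  have X: "X \<notin> line Z U"
    using aux_point_notin l X_def by blast
  have add: "add_pt L Z U A B = add_aux (line Z U) Z X A B"
    using add_pt_conv_add_aux l assms(2) X_def by blast
  have two: "Y = Z \<or> Y = U" if "Y \<in> line Z U" for Y
    using two_point_line[OF assms(1)] l assms(2) that by blast
  have "add_aux (line Z U) Z X U U \<noteq> U"
    using add_aux_cancel_right[OF l(1,2) X l(3,2,3)] add_aux_zero_left[OF l(1,2) X l(3)] assms(2)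
      by auto
  then have "add_aux (line Z U) Z X U U = Z"
    using two add_aux_in[OF l(1,2) X l(3)] by blast
  with two[OF assms(3)] two[OF assms(4)] show ?thesis
    unfolding add using add_aux_zero_left[OF l(1,2) X assms(4)]
      add_aux_zero_right[OF l(1,2) X assms(3)] assms(2)
    by (elim disjE) simp_all
qed

lemma mul_pt_two_point_line:
  assumes "\<not> thick" "Z \<noteq> U" "A \<in> line Z U" "B \<in> line Z U"
  shows "mul_pt L Z U A B = (if A = U \<and> B = U then U else Z)"
proof -
  have l: "line Z U \<in> L" "Z \<in> line Z U" "U \<in> line Z U"
    using line_props[OF assms(2)] by auto
  define X where "X = aux_point (line Z U)"
  have X: "X \<notin> line Z U"
    using aux_point_notin l X_def by blast
  have mul: "mul_pt L Z U A B = mul_aux (line Z U) Z U X A B"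
    using mul_pt_conv_mul_aux l assms(2) X_def by blast
  have two: "Y = Z \<or> Y = U" if "Y \<in> line Z U" for Y
    using two_point_line[OF assms(1)] l assms(2) that by blast
  from two[OF assms(3)] two[OF assms(4)] show ?thesis
    unfolding mul using mul_aux_zero_left[OF l assms(2) X assms(4)]
      mul_aux_zero_right[OF l assms(2) X assms(3)] mul_aux_one_left[OF l assms(2) X assms(4)]
        assms(2)
    by (elim disjE) simp_all
qed

section \<open>Parallel projections preserve addition and multiplication\<close>

text \<open>Both \<open>add_aux\<close> and \<open>mul_aux\<close> have this shape, with \<open>m = par X l1\<close> and
  \<open>m = line Z X\<close> respectively.\<close>

lemma proj_commute_two_step:
  assumes lines: "l1 \<in> L" "l2 \<in> L" "m \<in> L" "l1 \<noteq> l2" "l1 \<noteq> m" "l2 \<noteq> m" "pencil l1 l2 m"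
    and d: "d \<in> L" "\<not> d \<parallel> l1" "\<not> d \<parallel> l2"
    and X: "X \<in> m" "X \<notin> l1" "X \<notin> l2" and Q: "Q \<in> l1" "Q \<notin> l2"
    and A: "A \<in> l1" and B: "B \<in> l1" "B \<notin> m"
  shows "proj l2 d (proj l1 (line B X) (proj m (line Q X) A))
       = proj l2 (line (proj l2 d B) X) (proj m (line (proj l2 d Q) X) (proj l2 d A))"
proof -
  have pencil': "pencil m l1 l2"
    using pencil_commute lines(7) by blast
  have g: "proj l2 d Y \<in> l2" for Y
    using proj_props[OF lines(2) d(1,3)] by blast
  have gQ_m: "proj l2 d Q \<notin> m"
  proof
    assume "proj l2 d Q \<in> m"
    then have "proj l2 d Q \<in> l1"
      using pencil_mem[of m l1 l2] lines pencil' g by metis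
    then have "proj l2 d Q = Q"
      using proj_inj[OF lines(1,2) d] proj_fixed[OF lines(2) d(1,3) g] Q(1) by metis
    then show False
      using g Q(2) by metis
  qed
  have QX: "line Q X \<in> L" "\<not> line Q X \<parallel> m"
    using line_to_off_point[OF lines(1) Q(1) X(2)]
      line_to_off_point[OF lines(3) X(1)] pencil_mem[OF lines] Q line_commute by metis+
  have gQX: "line (proj l2 d Q) X \<in> L" "\<not> line (proj l2 d Q) X \<parallel> l2" "\<not> line (proj l2 d Q) X \<parallel> m"
    using line_to_off_point[OF lines(2) g X(3)]
      line_to_off_point[OF lines(3) X(1) gQ_m] line_commute by metis+
  have BX: "line B X \<in> L" "\<not> line B X \<parallel> m" "\<not> line B X \<parallel> l1"
    using line_to_off_point[OF lines(1) B(1) X(2)]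
      line_to_off_point[OF lines(3) X(1) B(2)] line_commute by metis+
  define P1 where "P1 = proj m (line Q X) A"
  have P1: "P1 \<in> m"
    using proj_props[OF lines(3) QX] P1_def by blast
  have "proj m (line (proj l2 d Q) X) (proj l2 d Q) = X"
    using proj_along_line[OF lines(3) gQX(1,3) X(1)] line_props g X(3) by metis
  then have first: "proj m (line (proj l2 d Q) X) (proj l2 d A) = P1"
    using pencil_proj_proj_eq_proj[OF lines d gQX Q A] P1_def by simp
  have "proj l1 (line B X) X = B"
    using proj_along_line[OF lines(1) BX(1,3) B(1)] line_props B(1) X(2) by metis
  then have "proj l2 d (proj l1 (line B X) P1) = proj l2 (line X (proj l2 d B)) P1"
    using pencil_proj_proj_eq_proj[OF lines(3,1,2) lines(5)[symmetric] lines(6)[symmetric] lines(4)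
        pencil' BX(1) BX(2,3) d X(1,2) P1] by simp
  then show ?thesis
    using first P1_def line_commute by metis
qed

lemma proj_add_aux_parallel:
  assumes l1: "l1 \<in> L" and l2: "l2 \<in> L" and p12: "l1 \<parallel> l2" "l1 \<noteq> l2"
    and d: "d \<in> L" "\<not> d \<parallel> l1" and Z: "Z \<in> l1" and A: "A \<in> l1" and B: "B \<in> l1"
    and X: "X \<notin> l1" "X \<notin> l2"
  shows "proj l2 d (add_aux l1 Z X A B) = add_aux l2 (proj l2 d Z) X (proj l2 d A) (proj l2 d B)"
proof -
  have "par X l2 = par X l1"
    using par_cong_parallel[OF p12(1)] by simp
  moreover have "proj l2 d (proj l1 (line B X) (proj (par X l1) (line Z X) A)) =
      proj l2 (line (proj l2 d B) X) (proj (par X l1) (line (proj l2 d Z) X) (proj l2 d A))"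
  proof (rule proj_commute_two_step)
    show "pencil l1 l2 (par X l1)"
      unfolding pencil_def using p12(1) par_off(3)[OF l1 X(1)] parallel_sym by blast
    show "l2 \<noteq> par X l1"
      using par_off(5)[OF l2 X(2)] par_cong_parallel[OF p12(1)] by simp
    show "\<not> d \<parallel> l2"
      using not_parallel_trans[OF p12(1) d(2)] .
  qed (use l1 l2 p12 d Z A B X par_off[OF l1 X(1)] parallel_notin[OF p12] in auto)
  ultimately show ?thesis
    unfolding add_aux_def by simp
qed

lemma proj_mul_aux_common_zero:
  assumes l1: "l1 \<in> L" and l2: "l2 \<in> L" and ne: "l1 \<noteq> l2"
    and d: "d \<in> L" "\<not> d \<parallel> l1" "\<not> d \<parallel> l2"
    and Z: "Z \<in> l1" "Z \<in> l2" and U: "U \<in> l1" "Z \<noteq> U"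
    and A: "A \<in> l1" and B: "B \<in> l1" and X: "X \<notin> l1" "X \<notin> l2"
  shows "proj l2 d (mul_aux l1 Z U X A B) =
    mul_aux l2 Z (proj l2 d U) X (proj l2 d A) (proj l2 d B)"
proof -
  have gZ: "proj l2 d Z = Z"
    using proj_fixed[OF l2 d(1,3) Z(2)] .
  have g: "proj l2 d Y \<in> l2" for Y
    using proj_props[OF l2 d(1,3)] by blast
  have ZgU: "Z \<noteq> proj l2 d U"
    using proj_inj[OF l1 l2 d Z(1) U(1)] gZ U(2) by metis
  show ?thesis
  proof (cases "B = Z")
    case True
    then show ?thesis
      using mul_aux_zero_right[OF l1 Z(1) U X(1) A] mul_aux_zero_right[OF l2 Z(2) g ZgU X(2) g] gZ
      by simp
  next
    case False
    have n: "line Z X \<in> L" "Z \<in> line Z X" "X \<in> line Z X" "line Z X \<noteq> l1" "line Z X \<noteq> l2"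
      using line_to_off_point[OF l1 Z(1) X(1)] line_to_off_point[OF l2 Z(2) X(2)] by auto
    have "proj l2 d (proj l1 (line B X) (proj (line Z X) (line U X) A)) =
        proj l2 (line (proj l2 d B) X) (proj (line Z X) (line (proj l2 d U) X) (proj l2 d A))"
    proof (rule proj_commute_two_step)
      show "pencil l1 l2 (line Z X)"
        unfolding pencil_def using Z n(2) by blast
      show "U \<notin> l2"
        using lines_eqI[OF l1 l2 Z U(1)] U(2) ne by blast
      show "B \<notin> line Z X"
        using lines_eqI[OF l1 n(1) Z(1) n(2) B] False n(4) by blast
    qed (use l1 l2 ne d X A B U n in auto)
    then show ?thesis
      unfolding mul_aux_def gZ .
  qed
qed

lemma add_first_step_common_zero:
  assumes l1: "l1 \<in> L" and l3: "l3 \<in> L" and ne: "l1 \<noteq> l3"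
    and d: "d \<in> L" "\<not> d \<parallel> l1" "\<not> d \<parallel> l3" and Z: "Z \<in> l1" "Z \<in> l3"
    and X: "X \<notin> l1" "X \<notin> l3" "\<not> line Z X \<parallel> d" and A: "A \<in> l1"
  shows "proj (par X l3) (line Z X) (proj l3 d A) \<in> par (proj (par X l1) (line Z X) A) d"
proof -
  define n where "n = line Z X"
  define gA where "gA = proj l3 d A"
  define P1 where "P1 = proj (par X l1) n A"
  define P1' where "P1' = proj (par X l3) n gA"
  have n: "n \<in> L" "Z \<in> n" "X \<in> n" "n \<noteq> l1" "n \<noteq> l3" "\<not> n \<parallel> d"
    using line_to_off_point[OF l1 Z(1) X(1)] line_to_off_point[OF l3 Z(2) X(2)] X(3) n_def by auto
  note m = par_off[OF l1 X(1)] and m' = par_off[OF l3 X(2)]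
  have P1: "P1 \<in> par X l1" "P1 \<in> par A n"
    using proj_props[OF m(1) n(1)] line_not_parallel_par[OF l1 Z(1) X(1)] P1_def n_def by blast+
  have P1': "P1' \<in> par X l3" "P1' \<in> par gA n"
    using proj_props[OF m'(1) n(1)] line_not_parallel_par[OF l3 Z(2) X(2)] P1'_def n_def by blast+
  have gA: "gA \<in> l3" "gA \<in> par A d"
    using proj_props[OF l3 d(1,3)] gA_def by auto
  show ?thesis
  proof (cases "A = Z")
    case True
    then have "P1 = X" "P1' = X"
      using proj_along_line[OF m(1) n(1) _ m(2) n(3,2)]
        proj_along_line[OF m'(1) n(1) _ m'(2) n(3,2)]
        line_not_parallel_par[OF l1 Z(1) X(1)] line_not_parallel_par[OF l3 Z(2) X(2)]
        proj_fixed[OF l3 d(1,3) Z(2)] P1_def P1'_def gA_def n_def by auto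
    then show ?thesis
      using par_props[OF d(1)] P1_def P1'_def gA_def n_def by simp
  next
    case False
    have gAZ: "gA \<noteq> Z"
      using proj_inj[OF l1 l3 d A Z(1)] proj_fixed[OF l3 d(1,3) Z(2)] False gA_def by metis
    have A_off: "A \<notin> n" "A \<notin> l3"
      using lines_eqI[OF l1 n(1) Z(1) n(2) A] lines_eqI[OF l1 l3 Z A] False n(4) ne by blast+
    have gA_off: "gA \<notin> n" "gA \<notin> l1"
      using lines_eqI[OF l3 n(1) Z(2) n(2) gA(1)] lines_eqI[OF l1 l3 Z _ gA(1)] gAZ n(5) ne
        by blast+
    have AgA: "A \<noteq> gA"
      using A_off gA by auto
    have "line A gA \<parallel> d"
      using mem_par_iff[OF d(1) AgA] gA by simp
    then have par_A_gA: "par A n \<noteq> par gA n"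
      using mem_par_iff[OF n(1) AgA] par_props[OF n(1)] n(6) parallel_trans parallel_sym by metis
    have P1X: "P1 \<noteq> X" and P1'X: "P1' \<noteq> X"
      using P1(2) P1'(2) par_mem_eq[OF n(1)] par_self[OF n(1,3)] par_props[OF n(1)] A_off(1)
        gA_off(1)
      by metis+
    have "par X l1 \<noteq> par X l3"
      using m(3) m'(3) parallel_trans parallel_sym parallel_common_point_eq Z ne by metis
    then have "P1' \<notin> line P1 X"
      using line_eqI[OF P1X m(1) P1(1) m(2)] lines_eqI[OF m(1) m'(1) m(2) m'(2) _ P1'(1)] P1'X
        by metis
    moreover have "line A Z \<parallel> line P1 X" "line Z gA \<parallel> line X P1'"
      using line_eqI[OF False l1 A Z(1)] line_eqI[OF gAZ[symmetric] l3 Z(2) gA(1)]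
        line_eqI[OF P1X m(1) P1(1) m(2)] line_eqI[OF P1'X[symmetric] m'(1) m'(2) P1'(1)]
        m(3) m'(3) parallel_sym by simp_all
    moreover have "A \<noteq> P1" "gA \<noteq> P1'" "Z \<noteq> X"
      using P1(1) P1'(1) m(4) m'(4) A gA(1) Z(1) X(1) by blast+
    moreover have "par A n \<noteq> par Z n" "par Z n \<noteq> par gA n" "X \<in> par Z n"
      using par_self[OF n(1,2)] par_props[OF n(1)] A_off(1) gA_off(1) n(3) by metis+
    ultimately have "line A gA \<parallel> line P1 P1'"
      using little_desargues[OF n(1) P1(2) _ P1'(2)] par_A_gA False gA_off(2)
        line_eqI[OF False l1 A Z(1)]
        P1X by simp
    moreover have "P1 \<noteq> P1'"
      using P1(1) P1'(1) m(4) m'(4) P1'X lines_eqI[OF m(1) m'(1) m(2) m'(2)] \<open>par X l1 \<noteq> par X l3\<close>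
      by blast
    ultimately show ?thesis
      using \<open>line A gA \<parallel> d\<close> mem_par_iff[OF d(1)] parallel_trans parallel_sym P1_def P1'_def gA_def
        n_def
      by metis
  qed
qed

text \<open>Here and in \<open>proj_mul_aux_parallel\<close> the auxiliary point lies on the parallel to \<open>d\<close>
  through \<open>B\<close>, so that both sides end with a projection along that line.\<close>

lemma proj_add_aux_common_zero:
  assumes l1: "l1 \<in> L" and l3: "l3 \<in> L" and ne: "l1 \<noteq> l3"
    and d: "d \<in> L" "\<not> d \<parallel> l1" "\<not> d \<parallel> l3" and Z: "Z \<in> l1" "Z \<in> l3"
    and A: "A \<in> l1" and B: "B \<in> l1"
    and X: "X \<in> par B d" "X \<noteq> B" "X \<noteq> proj l3 d B"
  shows "proj l3 d (add_aux l1 Z X A B) = add_aux l3 Z X (proj l3 d A) (proj l3 d B)"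
proof -
  have gB: "proj l3 d B \<in> l3" "proj l3 d B \<in> par B d"
    using proj_props[OF l3 d(1,3)] by auto
  have X_gB: "X \<in> par (proj l3 d B) d"
    using par_mem_eq[OF d(1) gB(2)] X(1) by simp
  have X1: "X \<notin> l1" and X3: "X \<notin> l3"
    using par_point_notin[OF l1 d(1,2) B X(1,2)] par_point_notin[OF l3 d(1,3) gB(1) X_gB X(3)] .
  show ?thesis
  proof (cases "B = Z")
    case True
    then show ?thesis
      using add_aux_zero_right[OF l1 Z(1) X1 A] add_aux_zero_right[OF l3 Z(2) X3]
        proj_props[OF l3 d(1,3)]
        proj_fixed[OF l3 d(1,3) Z(2)] by simp
  next
    case False
    have k: "line B X = par B d" "line (proj l3 d B) X = par B d" "par B d \<parallel> d"
      using line_eq_par[OF d(1)] X gB par_mem_eq[OF d(1) gB(2)] line_commute par_props[OF d(1)]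
        by metis+
    have "\<not> line Z X \<parallel> d"
    proof
      assume "line Z X \<parallel> d"
      then have "Z \<in> par X d"
        using mem_par_iff[OF d(1)] X1 Z(1) line_commute by metis
      then show False
        using par_point_notin[OF l1 d(1,2) B] par_mem_eq[OF d(1) X(1)] X(2) False Z(1) by metis
    qed
    then have "proj (par X l3) (line Z X) (proj l3 d A) \<in> par (proj (par X l1) (line Z X) A) d"
      using add_first_step_common_zero[OF l1 l3 ne d Z X1 X3 _ A] by blast
    then show ?thesis
      unfolding add_aux_def k(1,2) using proj_proj_parallel_direction[OF l1 l3 d k(3)] by blast
  qed
qed

lemma mul_first_step_parallel:
  assumes l: "l1 \<in> L" "l2 \<in> L" "l1 \<parallel> l2" "l1 \<noteq> l2" and d: "d \<in> L" "\<not> d \<parallel> l1"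
    and Z: "Z \<in> l1" and U: "U \<in> l1" "Z \<noteq> U"
    and X: "X \<notin> l1" "X \<notin> par Z d" "X \<notin> par U d"
    and X': "X' \<in> par X d" "line (proj l2 d Z) X' \<parallel> line Z X" and A: "A \<in> l1"
  shows "proj (line (proj l2 d Z) X') (line (proj l2 d U) X') (proj l2 d A)
      \<in> par (proj (line Z X) (line U X) A) d"
proof -
  have d2: "\<not> d \<parallel> l2"
    using not_parallel_trans[OF l(3) d(2)] .
  have g: "proj l2 d V \<in> l2" "proj l2 d V \<in> par V d" for V
    using proj_props[OF l(2) d(1) d2] by auto
  have X'_l2: "X' \<notin> l2" and UX: "line (proj l2 d U) X' \<parallel> line U X"
    using translate_parallel[OF l d U(1) Z U(2)[symmetric] X(1,3,2) X'] by blast+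
  define n where "n = line Z X"
  define n' where "n' = line (proj l2 d Z) X'"
  note nU = mul_aux_lines[OF l(1) Z U X(1), folded n_def]
  have n: "n \<in> L" "Z \<in> n" "X \<in> n" "n \<noteq> l1"
    using line_to_off_point[OF l(1) Z X(1)] n_def by auto
  have n': "n' \<in> L" "proj l2 d Z \<in> n'" "X' \<in> n'" "n' \<parallel> n"
    using line_to_off_point[OF l(2) g(1) X'_l2] X'(2) n_def n'_def by auto
  have n_d: "\<not> n \<parallel> d"
    using mem_par_iff[OF d(1)] X(1,2) Z n_def by metis
  then have nd: "\<not> d \<parallel> n'"
    using n'(4) parallel_trans parallel_sym by metis
  have gUX: "line (proj l2 d U) X' \<in> L" "\<not> line (proj l2 d U) X' \<parallel> n'"
    using UX nU(3) n'(4) parallel_trans parallel_sym parallel_in_L n_def by metis+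
  define P1 where "P1 = proj n (line U X) A"
  define Q where "Q = proj n' d P1"
  have P1: "P1 \<in> n" "P1 \<in> par A (line U X)"
    using proj_props[OF n(1) nU(2,3)] P1_def n_def by auto
  have Q: "Q \<in> n'" "Q \<in> par P1 d"
    using proj_props[OF n'(1) d(1) nd] Q_def by auto
  have "Q \<in> par (proj l2 d A) (line (proj l2 d U) X')"
  proof (cases "A = Z")
    case True
    then have "Q = proj l2 d A"
      using proj_fixed[OF n(1) nU(2,3) n(2)] proj_eqI[OF n'(1) d(1) nd n'(2) g(2)] P1_def Q_def
      by simp
    then show ?thesis
      using par_props[OF gUX(1)] by simp
  next
    case False
    have P1Z: "P1 \<noteq> Z"
      using proj_inj[OF l(1) n(1) nU(2) nU(4) nU(3) A Z] proj_fixed[OF n(1) nU(2,3) n(2)]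
        False P1_def by metis
    have P1_off: "P1 \<notin> l1" "P1 \<notin> par Z d"
      using lines_eqI[OF l(1) n(1) Z n(2) _ P1(1)] lines_eqI[OF _ n(1) _ n(2) _ P1(1)]
        par_props[OF d(1)]
        P1Z n(4) n_d by metis+
    have AP1: "A \<noteq> P1"
      using P1_off A by blast
    have "P1 \<notin> par A d"
    proof
      assume "P1 \<in> par A d"
      then have "line U X \<parallel> d"
        using line_eq_par[OF d(1) AP1] line_eq_par[OF nU(2) AP1 P1(2)] par_props[OF d(1)]
          par_props[OF nU(2)] parallel_trans parallel_sym by metis
      then show False
        using mem_par_iff[OF d(1)] X(1,3) U(1) by metis
    qed
    moreover have "line (proj l2 d Z) Q \<parallel> line Z P1"
    proof -
      have "Q \<noteq> proj l2 d Z"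
        using Q(2) g(2) P1_off(2) par_mem_eq[OF d(1)] par_props[OF d(1)] by metis
      then show ?thesis
        using line_eqI[OF _ n'(1,2) Q(1)] line_eqI[OF P1Z[symmetric] n(1,2) P1(1)] n'(4) by metis
    qed
    ultimately have "Q \<notin> l2" "line (proj l2 d A) Q \<parallel> line A P1"
      using translate_parallel[OF l d A Z False P1_off(1) _ P1_off(2) Q(2)] by blast+
    moreover have "line A P1 \<parallel> line (proj l2 d U) X'"
      using line_eq_par[OF nU(2) AP1 P1(2)] par_props[OF nU(2)] UX parallel_trans parallel_sym
        by metis
    ultimately show ?thesis
      using mem_par_iff[OF gUX(1)] g(1) parallel_trans by metis
  qed
  then have "proj n' (line (proj l2 d U) X') (proj l2 d A) = Q"
    using proj_eqI[OF n'(1) gUX Q(1)] by blast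
  then show ?thesis
    using Q(2) P1_def n_def n'_def by simp
qed

lemma proj_mul_aux_parallel:
  assumes l: "l1 \<in> L" "l2 \<in> L" "l1 \<parallel> l2" "l1 \<noteq> l2" and d: "d \<in> L" "\<not> d \<parallel> l1"
    and Z: "Z \<in> l1" and U: "U \<in> l1" "Z \<noteq> U" and A: "A \<in> l1" and B: "B \<in> l1" "B \<noteq> Z" "B \<noteq> U"
    and X: "X \<in> par B d" "X \<noteq> B"
  shows "\<exists>X'. X' \<notin> l2 \<and> proj l2 d (mul_aux l1 Z U X A B) =
    mul_aux l2 (proj l2 d Z) (proj l2 d U) X' (proj l2 d A) (proj l2 d B)"
proof -
  have d2: "\<not> d \<parallel> l2"
    using not_parallel_trans[OF l(3) d(2)] .
  have g: "proj l2 d V \<in> l2" "proj l2 d V \<in> par V d" for V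
    using proj_props[OF l(2) d(1) d2] by auto
  define k where "k = par B d"
  have k: "k \<in> L" "k \<parallel> d" "par X d = k"
    using par_props[OF d(1)] par_mem_eq[OF d(1) X(1)] k_def by auto
  have X1: "X \<notin> l1"
    using par_point_notin[OF l(1) d B(1) X] .
  have off_k: "V \<notin> k" if "V \<in> par W d" "W \<in> l1" "W \<noteq> B" for V W
    using that par_mem_eq[OF d(1)] par_inj[OF l(1) d _ B(1)] k_def by metis
  have X_off: "X \<notin> par Z d" "X \<notin> par U d"
    using off_k[OF _ Z] off_k[OF _ U(1)] B(2,3) par_mem_eq[OF d(1)] k(3) par_props[OF d(1)]
      by metis+
  have n: "line Z X \<in> L" "\<not> line Z X \<parallel> k"
    using line_to_off_point(1)[OF l(1) Z X1] mem_par_iff[OF d(1)] X1 Z X_off(1) k(2)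
      parallel_trans by metis+
  define X' where "X' = proj k (line Z X) (proj l2 d Z)"
  have X': "X' \<in> k" "X' \<in> par (proj l2 d Z) (line Z X)"
    using proj_props[OF k(1) n] X'_def by auto
  have "X' \<noteq> proj l2 d Z"
    using X'(1) off_k[OF g(2) Z] B(2) by metis
  then have X'Z: "line (proj l2 d Z) X' \<parallel> line Z X"
    using line_eq_par[OF n(1) _ X'(2)] par_props[OF n(1)] by metis
  have X'X: "X' \<in> par X d"
    using X'(1) k(3) by simp
  have X'_l2: "X' \<notin> l2"
    using translate_parallel(1)[OF l d U(1) Z U(2)[symmetric] X1 X_off(2,1) X'X X'Z] .
  have "proj l2 d B \<noteq> X'"
    using g(1) X'_l2 by metis
  then have lines: "line B X = k" "line (proj l2 d B) X' = k"
    using line_eq_par[OF d(1) X(2)[symmetric] X(1)]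
      line_eqI[OF _ k(1) g(2)[of B, folded k_def] X'(1)]
    unfolding k_def by blast+
  have "proj l2 d (mul_aux l1 Z U X A B) =
      mul_aux l2 (proj l2 d Z) (proj l2 d U) X' (proj l2 d A) (proj l2 d B)"
    unfolding mul_aux_def lines
    by (rule proj_proj_parallel_direction[OF l(1,2) d d2 k(2)
        mul_first_step_parallel[OF l d Z U X1 X_off X'X X'Z A]])
  then show ?thesis
    using X'_l2 by blast
qed

definition preserves_ops :: "('p \<Rightarrow> 'p) \<Rightarrow> 'p \<Rightarrow> 'p \<Rightarrow> bool" where
  "preserves_ops f Z U \<longleftrightarrow> (\<forall>A\<in>line Z U. \<forall>B\<in>line Z U.
     f (add_pt L Z U A B) = add_pt L (f Z) (f U) (f A) (f B) \<and>
     f (mul_pt L Z U A B) = mul_pt L (f Z) (f U) (f A) (f B))"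

lemma preserves_ops_cong:
  assumes "Z \<noteq> U" "\<And>X. X \<in> line Z U \<Longrightarrow> f X = g X" "preserves_ops g Z U"
  shows "preserves_ops f Z U"
  using assms line_props[OF assms(1)] add_pt_in[OF assms(1)] mul_pt_in[OF assms(1)]
  unfolding preserves_ops_def by simp

lemma preserves_ops_comp:
  assumes "Z \<noteq> U" "\<And>X. X \<in> line Z U \<Longrightarrow> g X \<in> line (g Z) (g U)"
    and "preserves_ops g Z U" "preserves_ops h (g Z) (g U)"
  shows "preserves_ops (h \<circ> g) Z U"
  using assms add_pt_in[OF assms(1)] mul_pt_in[OF assms(1)] unfolding preserves_ops_def by simp

lemma preserves_ops_two_point_lines:
  assumes "\<not> thick" "Z \<noteq> U" "\<And>X. X \<in> line Z U \<Longrightarrow> f X \<in> line (f Z) (f U)" "inj_on f (line Z U)"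
  shows "preserves_ops f Z U"
proof -
  have l: "Z \<in> line Z U" "U \<in> line Z U"
    using line_props[OF assms(2)] by auto
  then have fZU: "f Z \<noteq> f U"
    using assms(2,4) inj_on_eq_iff by metis
  show ?thesis
    unfolding preserves_ops_def
    using add_pt_two_point_line[OF assms(1,2)] mul_pt_two_point_line[OF assms(1,2)]
      add_pt_two_point_line[OF assms(1) fZU] mul_pt_two_point_line[OF assms(1) fZU]
      assms(3) inj_on_eq_iff[OF assms(4)] l by auto
qed

lemma preserves_ops_parallel:
  assumes "thick" and l: "l1 \<in> L" "l2 \<in> L" "l1 \<parallel> l2" "l1 \<noteq> l2" and d: "d \<in> L" "\<not> d \<parallel> l1"
    and Z: "Z \<in> l1" and U: "U \<in> l1" "Z \<noteq> U"
  shows "preserves_ops (proj l2 d) Z U"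
proof -
  have d2: "\<not> d \<parallel> l2"
    using not_parallel_trans[OF l(3) d(2)] .
  have g: "proj l2 d V \<in> l2" for V
    using proj_props[OF l(2) d(1) d2] by blast
  have gZU: "proj l2 d Z \<noteq> proj l2 d U"
    using proj_inj[OF l(1,2) d d2 Z U(1)] U(2) by blast
  have lZU: "line Z U = l1" and lgZU: "line (proj l2 d Z) (proj l2 d U) = l2"
    using line_eqI[OF U(2) l(1) Z U(1)] line_eqI[OF gZU l(2) g g] by auto
  show ?thesis
    unfolding preserves_ops_def lZU
  proof (intro ballI conjI)
    fix A B assume A: "A \<in> l1" and B: "B \<in> l1"
    obtain X where X: "X \<notin> l1" "X \<notin> l2"
      using ex_point_off_two_lines[OF assms(1) l(1,2)] by blast
    show "proj l2 d (add_pt L Z U A B) =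
        add_pt L (proj l2 d Z) (proj l2 d U) (proj l2 d A) (proj l2 d B)"
      using add_pt_eq_add_aux[OF assms(1) l(1) Z U X(1) A B]
        add_pt_eq_add_aux[OF assms(1) l(2) g g gZU X(2) g g]
        proj_add_aux_parallel[OF l d Z A B X] by simp
    show "proj l2 d (mul_pt L Z U A B) =
        mul_pt L (proj l2 d Z) (proj l2 d U) (proj l2 d A) (proj l2 d B)"
    proof (cases "B = Z \<or> B = U")
      case True
      then show ?thesis
        using mul_pt_zero_right[OF U(2)] mul_pt_one_right[OF U(2)] mul_pt_zero_right[OF gZU]
          mul_pt_one_right[OF gZU] lZU lgZU A g by auto
    next
      case False
      obtain P Q where "P \<noteq> Q" "P \<in> par B d" "Q \<in> par B d"
        using ex_two_points_on_line par_props[OF d(1)] by metis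
      then obtain X where X: "X \<in> par B d" "X \<noteq> B"
        by metis
      obtain X' where X': "X' \<notin> l2" "proj l2 d (mul_aux l1 Z U X A B) =
          mul_aux l2 (proj l2 d Z) (proj l2 d U) X' (proj l2 d A) (proj l2 d B)"
        using proj_mul_aux_parallel[OF l d Z U A B _ _ X] False by blast
      then show ?thesis
        using mul_pt_eq_mul_aux[OF l(1) Z U par_point_notin[OF l(1) d B X] A B]
          mul_pt_eq_mul_aux[OF l(2) g g gZU X'(1) g g] by simp
    qed
  qed
qed

lemma preserves_ops_common_zero:
  assumes "thick" and l: "l1 \<in> L" "l2 \<in> L" "l1 \<noteq> l2" and d: "d \<in> L" "\<not> d \<parallel> l1" "\<not> d \<parallel> l2"
    and Z: "Z \<in> l1" "Z \<in> l2" and U: "U \<in> l1" "Z \<noteq> U"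
  shows "preserves_ops (proj l2 d) Z U"
proof -
  have g: "proj l2 d V \<in> l2" "proj l2 d V \<in> par V d" for V
    using proj_props[OF l(2) d(1,3)] by auto
  have gZ: "proj l2 d Z = Z"
    using proj_fixed[OF l(2) d(1,3) Z(2)] .
  have gZU: "Z \<noteq> proj l2 d U"
    using proj_inj[OF l(1,2) d Z(1) U(1)] gZ U(2) by metis
  have lZU: "line Z U = l1"
    using line_eqI[OF U(2) l(1) Z(1) U(1)] .
  show ?thesis
    unfolding preserves_ops_def lZU gZ
  proof (intro ballI conjI)
    fix A B assume A: "A \<in> l1" and B: "B \<in> l1"
    obtain X where X: "X \<in> par B d" "X \<noteq> B" "X \<noteq> proj l2 d B"
      using ex_point_avoiding_two[OF assms(1)] par_props[OF d(1)] by blast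
    have "X \<notin> l1" "X \<notin> l2"
      using par_point_notin[OF l(1) d(1,2) B X(1,2)] par_point_notin[OF l(2) d(1,3) g(1) _ X(3)]
        par_mem_eq[OF d(1) g(2)] X(1) by auto
    then show "proj l2 d (add_pt L Z U A B) = add_pt L Z (proj l2 d U) (proj l2 d A) (proj l2 d B)"
      using add_pt_eq_add_aux[OF assms(1) l(1) Z(1) U]
        add_pt_eq_add_aux[OF assms(1) l(2) Z(2) g(1) gZU]
        proj_add_aux_common_zero[OF l d Z A B X] A B g(1) by simp
  next
    fix A B assume A: "A \<in> l1" and B: "B \<in> l1"
    obtain X where X: "X \<notin> l1" "X \<notin> l2"
      using ex_point_off_two_lines[OF assms(1) l(1,2)] by blast
    then show "proj l2 d (mul_pt L Z U A B) = mul_pt L Z (proj l2 d U) (proj l2 d A) (proj l2 d B)"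
      using mul_pt_eq_mul_aux[OF l(1) Z(1) U] mul_pt_eq_mul_aux[OF l(2) Z(2) g(1) gZU]
        proj_mul_aux_common_zero[OF l d Z U A B X] A B g(1) by simp
  qed
qed

lemma preserves_ops_proj:
  assumes l: "l1 \<in> L" "l2 \<in> L" and Z: "Z \<in> l1" and U: "U \<in> l1" "Z \<noteq> U"
    and d: "d \<in> L" "\<not> d \<parallel> l1" "\<not> d \<parallel> l2"
  shows "preserves_ops (proj l2 d) Z U"
proof -
  have lZU: "line Z U = l1"
    using line_eqI[OF U(2) l(1) Z U(1)] .
  have g: "proj l2 d V \<in> l2" for V
    using proj_props[OF l(2) d(1,3)] by blast
  have inj: "inj_on (proj l2 d) l1"
    using proj_inj[OF l d] by (blast intro: inj_onI)
  consider "\<not> thick" | "thick" "l1 = l2" | "thick" "l1 \<parallel> l2" "l1 \<noteq> l2" | "thick" "\<not> l1 \<parallel> l2"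
    by blast
  then show ?thesis
  proof cases
    case 1
    have "proj l2 d Z \<noteq> proj l2 d U"
      using inj Z U unfolding inj_on_def by blast
    then have "line (proj l2 d Z) (proj l2 d U) = l2"
      using line_eqI[OF _ l(2) g g] by blast
    then show ?thesis
      using preserves_ops_two_point_lines[OF 1 U(2)] inj g lZU by simp
  next
    case 2
    have "preserves_ops (\<lambda>X. X) Z U"
      unfolding preserves_ops_def by simp
    then show ?thesis
      using preserves_ops_cong[OF U(2)] proj_fixed[OF l(2) d(1,3)] lZU 2(2) by simp
  next
    case 3
    then show ?thesis
      using preserves_ops_parallel[OF 3(1) l 3(2,3) d(1,2) Z U] by blast
  next
    case 4
    define l3 where "l3 = par Z l2"
    have l3: "l3 \<in> L" "Z \<in> l3" "l3 \<parallel> l2" "l1 \<noteq> l3" "\<not> d \<parallel> l3"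
      using par_props[OF l(2)] 4(2) not_parallel_trans[OF parallel_sym d(3)] parallel_sym l3_def
        by metis+
    have g3: "proj l3 d V \<in> l3" "proj l3 d V \<in> par V d" for V
      using proj_props[OF l3(1) d(1) l3(5)] by auto
    have g3Z: "proj l3 d Z = Z"
      using proj_fixed[OF l3(1) d(1) l3(5,2)] .
    have g3U: "Z \<noteq> proj l3 d U"
      using proj_inj[OF l(1) l3(1) d(1,2) l3(5) Z U(1)] g3Z U(2) by metis
    have first: "preserves_ops (proj l3 d) Z U"
      using preserves_ops_common_zero[OF 4(1) l(1) l3(1,4) d(1,2) l3(5) Z l3(2) U] .
    show ?thesis
    proof (cases "l3 = l2")
      case True
      then show ?thesis
        using first by simp
    next
      case False
      have "proj l2 d (proj l3 d X) = proj l2 d X" for X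
        using proj_eq_if_par_eq par_mem_eq[OF d(1) g3(2)] by blast
      then have comp: "proj l2 d \<circ> proj l3 d = proj l2 d"
        by (simp add: fun_eq_iff)
      have "preserves_ops (proj l2 d) Z (proj l3 d U)"
        using preserves_ops_parallel[OF 4(1) l3(1) l(2) l3(3) False d(1) l3(5) l3(2) g3(1) g3U] .
      moreover have "line Z (proj l3 d U) = l3"
        using line_eqI[OF g3U l3(1,2) g3(1)] .
      ultimately have "preserves_ops (proj l2 d \<circ> proj l3 d) Z U"
        using preserves_ops_comp[OF U(2) _ first] g3(1) g3Z by simp
      then show ?thesis
        unfolding comp .
    qed
  qed
qed

lemma parallel_projection_eq_proj:
  assumes "parallel_projection L l1 l2 f" "l1 \<in> L" "l2 \<in> L"
  obtains d where "d \<in> L" "\<not> d \<parallel> l1" "\<not> d \<parallel> l2" "\<And>X. X \<in> l1 \<Longrightarrow> f X = proj l2 d X"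
proof -
  obtain d where d: "d \<in> L" "\<not> d \<parallel> l1" and f: "\<And>X. X \<in> l1 \<Longrightarrow> f X \<in> l2 \<and> f X \<in> par X d"
    using assms(1) unfolding parallel_projection_def by blast
  have "\<not> d \<parallel> l2"
  proof
    assume "d \<parallel> l2"
    then have "par X d = l2" if "X \<in> l1" for X
      using f[OF that] par_props[OF d(1)] parallel_trans parallel_common_point_eq by metis
    then have "l1 = l2"
      using ex_two_points_on_line[OF assms(2)] lines_eqI[OF assms(2,3)] par_props[OF d(1)] by metis
    then show False
      using \<open>d \<parallel> l2\<close> d(2) by simp
  qed
  then show ?thesis
    using that d f proj_eqI[OF assms(3) d(1)] by metis
qed

section \<open>Negatives, inverses and the cross ratio\<close>

lemma add_pt_solve:
  assumes "Z \<noteq> U" "A \<in> line Z U" "T \<in> line Z U"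
  shows "\<exists>!B. B \<in> line Z U \<and> add_pt L Z U A B = T"
  using add_aux_solve[OF line_props(1,2)[OF assms(1)] aux_point_notin assms(2,3)]
    add_pt_conv_add_aux[OF line_props[OF assms(1)] assms(1)] line_props(1)[OF assms(1)] by simp

lemma mul_pt_solve:
  assumes "Z \<noteq> U" "A \<in> line Z U" "A \<noteq> Z" "T \<in> line Z U"
  shows "\<exists>!B. B \<in> line Z U \<and> mul_pt L Z U A B = T"
  using mul_aux_solve[OF line_props[OF assms(1)] assms(1) aux_point_notin assms(2-4)]
    mul_pt_conv_mul_aux[OF line_props[OF assms(1)] assms(1)] line_props(1)[OF assms(1)] by simp

lemma add_pt_cancel_right:
  assumes "Z \<noteq> U" "A \<in> line Z U" "A' \<in> line Z U" "B \<in> line Z U"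
    and "add_pt L Z U A B = add_pt L Z U A' B"
  shows "A = A'"
  using add_aux_cancel_right[OF line_props(1,2)[OF assms(1)] aux_point_notin assms(2-4)]
    add_pt_conv_add_aux[OF line_props[OF assms(1)] assms(1)] line_props(1)[OF assms(1)] assms(5)
      by simp

lemma neg_pt:
  assumes "Z \<noteq> U" "X \<in> line Z U"
  shows "neg_pt L Z U X \<in> line Z U \<and> add_pt L Z U X (neg_pt L Z U X) = Z"
  unfolding neg_pt_def using theI'[OF add_pt_solve[OF assms line_props(2)[OF assms(1)]]] .

lemma neg_pt_eqI:
  assumes "Z \<noteq> U" "X \<in> line Z U" "Y \<in> line Z U" "add_pt L Z U X Y = Z"
  shows "neg_pt L Z U X = Y"
  unfolding neg_pt_def
    using the1_equality[OF add_pt_solve[OF assms(1,2) line_props(2)[OF assms(1)]]] assms(3,4)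
  by blast

lemma inv_pt:
  assumes "Z \<noteq> U" "X \<in> line Z U" "X \<noteq> Z"
  shows "inv_pt L Z U X \<in> line Z U \<and> mul_pt L Z U X (inv_pt L Z U X) = U"
  unfolding inv_pt_def using theI'[OF mul_pt_solve[OF assms line_props(3)[OF assms(1)]]] .

lemma inv_pt_eqI:
  assumes "Z \<noteq> U" "X \<in> line Z U" "X \<noteq> Z" "Y \<in> line Z U" "mul_pt L Z U X Y = U"
  shows "inv_pt L Z U X = Y"
  unfolding inv_pt_def
    using the1_equality[OF mul_pt_solve[OF assms(1-3) line_props(3)[OF assms(1)]]] assms(4,5)
  by blast

lemma sub_pt_in: "Z \<noteq> U \<Longrightarrow> Y \<in> line Z U \<Longrightarrow> sub_pt L Z U X Y \<in> line Z U"
  unfolding sub_pt_def using add_pt_in neg_pt by blast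

lemma sub_pt_neq_zero:
  assumes "Z \<noteq> U" "X \<in> line Z U" "Y \<in> line Z U" "X \<noteq> Y"
  shows "sub_pt L Z U X Y \<noteq> Z"
  unfolding sub_pt_def using add_pt_cancel_right[OF assms(1-3)] neg_pt[OF assms(1,3)] assms(4)
    by metis

context
  fixes f :: "'p \<Rightarrow> 'p" and Z U :: 'p
  assumes ZU: "Z \<noteq> U"
    and maps: "\<And>X. X \<in> line Z U \<Longrightarrow> f X \<in> line (f Z) (f U)"
    and inj: "inj_on f (line Z U)"
    and hom: "preserves_ops f Z U"
begin

lemma image_neq: "X \<in> line Z U \<Longrightarrow> Y \<in> line Z U \<Longrightarrow> X \<noteq> Y \<Longrightarrow> f X \<noteq> f Y"
  using inj unfolding inj_on_def by blast

lemma image_base_neq: "f Z \<noteq> f U"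
  using image_neq line_props[OF ZU] ZU by blast

lemma neg_pt_hom: "X \<in> line Z U \<Longrightarrow> f (neg_pt L Z U X) = neg_pt L (f Z) (f U) (f X)"
  using neg_pt_eqI[OF image_base_neq] maps neg_pt[OF ZU] hom unfolding preserves_ops_def by metis

lemma sub_pt_hom:
  "X \<in> line Z U \<Longrightarrow> Y \<in> line Z U \<Longrightarrow> f (sub_pt L Z U X Y) = sub_pt L (f Z) (f U) (f X) (f Y)"
  unfolding sub_pt_def using hom neg_pt[OF ZU] neg_pt_hom unfolding preserves_ops_def by simp

lemma inv_pt_hom: "X \<in> line Z U \<Longrightarrow> X \<noteq> Z \<Longrightarrow> f (inv_pt L Z U X) = inv_pt L (f Z) (f U) (f X)"
  using inv_pt_eqI[OF image_base_neq] maps inv_pt[OF ZU] hom image_neq line_props[OF ZU]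
  unfolding preserves_ops_def by metis

lemma cross_ratio_hom:
  assumes "A \<in> line Z U" "B \<in> line Z U" "C \<in> line Z U" "D \<in> line Z U" "A \<noteq> D" "B \<noteq> C"
  shows "f (cross_ratio L Z U A B C D) = cross_ratio L (f Z) (f U) (f A) (f B) (f C) (f D)"
proof -
  have sub: "sub_pt L Z U A D \<in> line Z U" "sub_pt L Z U B D \<in> line Z U"
      "sub_pt L Z U B C \<in> line Z U" "sub_pt L Z U A C \<in> line Z U"
      "sub_pt L Z U A D \<noteq> Z" "sub_pt L Z U B C \<noteq> Z"
    using sub_pt_in[OF ZU] sub_pt_neq_zero[OF ZU] assms by auto
  then have inv: "inv_pt L Z U (sub_pt L Z U A D) \<in> line Z U"
    "inv_pt L Z U (sub_pt L Z U B C) \<in> line Z U"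
    using inv_pt[OF ZU] by auto
  then show ?thesis
    unfolding cross_ratio_def using hom sub inv mul_pt_in[OF ZU] inv_pt_hom sub_pt_hom assms
    unfolding preserves_ops_def by simp
qed

end

end

theorem mainTheorem6:
  fixes L :: "'p set set" and l1 l2 :: "'p set" and f :: "'p \<Rightarrow> 'p"
    and Z U A B C D :: 'p
  assumes "desargues_affine_plane L"
    and "l1 \<in> L" and "l2 \<in> L"
    and "Z \<in> l1" and "U \<in> l1" and "Z \<noteq> U"
    and "parallel_projection L l1 l2 f"
    and "A \<in> l1" and "B \<in> l1" and "C \<in> l1" and "D \<in> l1"
    and "A \<noteq> D" and "B \<noteq> C"
  shows "f (cross_ratio L Z U A B C D) =
         cross_ratio L (f Z) (f U) (f A) (f B) (f C) (f D)"
proof -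
  interpret desargues_plane L
    using assms(1,6) by unfold_locales blast+
  obtain d where d: "d \<in> L" "\<not> parallel L d l1" "\<not> parallel L d l2"
    and f: "\<And>X. X \<in> l1 \<Longrightarrow> f X = proj l2 d X"
    using parallel_projection_eq_proj[OF assms(7,2,3)] by blast
  have l1: "line Z U = l1"
    using line_eqI[OF assms(6,2,4,5)] .
  have hom: "preserves_ops f Z U"
    using preserves_ops_cong[OF assms(6) _ preserves_ops_proj[OF assms(2-6) d]] f l1 by simp
  have inj: "inj_on f (line Z U)"
    using proj_inj[OF assms(2,3) d] f l1 by (metis inj_onI)
  then have "f Z \<noteq> f U"
    using assms(4-6) l1 unfolding inj_on_def by blast
  then have "line (f Z) (f U) = l2"
    using line_eqI[OF _ assms(3)] proj_props[OF assms(3) d(1,3)] f assms(4,5) by metis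
  then have maps: "f X \<in> line (f Z) (f U)" if "X \<in> line Z U" for X
    using proj_props[OF assms(3) d(1,3)] f l1 that by simp
  show ?thesis
    by (rule cross_ratio_hom[OF assms(6) maps inj hom]) (use assms(8-13) l1 in simp_all)
qed

end
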